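(* For any natural number $n \geq 1$, $\{\omega^n, (\omega^n)^\star\} \leq_c \{\omega^{2n-1}, (\omega^{2n-1})^\star\}$.
   Context: Structures have domains contained in $\omega$. For countable structures $\mathcal{A},\mathcal{B}$, the class $\{\mathcal{A},\mathcal{B}\}$ denotes the class of all structures (with domain $\subseteq\omega$) isomorphic to $\mathcal{A}$ or to $\mathcal{B}$. Linear orders are in the language $\{<\}$; $L^\star$ is the reverse of a linear order $L$; $\omega^m$ denotes ordinal exponentiation (as an order type). An enumeration operator $\Gamma$ is a c.e. set of pairs $(\alpha,\varphi)$ with $\alpha$ a finite set of basic (atomic or negated atomic) sentences of the input language with constants from $\omega$ and $\varphi$ a basic sentence of the output language with constants from $\omega$; $\Gamma(X)=\{\varphi : (\alpha,\varphi)\in\Gamma,\ \alpha\subseteq X\}$. $\Gamma$ is a computable embedding of $\mathcal{K}_0$ into $\mathcal{K}_1$ ($\mathcal{K}_0\leq_c\mathcal{K}_1$) if for every $\mathcal{A}\in\mathcal{K}_0$, $\Gamma$ applied to the atomic diagram of $\mathcal{A}$ is the atomic diagram of a structure $\Gamma(\mathcal{A})\in\mathcal{K}_1$, and for all $\mathcal{A},\mathcal{B}\in\mathcal{K}_0$, $\mathcal{A}\cong\mathcal{B}$ iff $\Gamma(\mathcal{A})\cong\Gamma(\mathcal{B})$. *)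

theory Defs
  imports Main "HOL-Library.Nat_Bijection"
begin

datatype recf = Zero | Succ | Proj nat | Comp recf "recf list" | Prim recf recf | Mn recf

inductive reval :: "recf \<Rightarrow> nat list \<Rightarrow> nat \<Rightarrow> bool" where
  reval_zero: "reval Zero xs 0"
| reval_succ: "reval Succ (x # xs) (Suc x)"
| reval_proj: "i < length xs \<Longrightarrow> reval (Proj i) xs (xs ! i)"
| reval_comp: "list_all2 (\<lambda>g y. reval g xs y) gs ys \<Longrightarrow> reval f ys z \<Longrightarrow> reval (Comp f gs) xs z"
| reval_prim0: "reval f xs y \<Longrightarrow> reval (Prim f g) (0 # xs) y"
| reval_primS: "reval (Prim f g) (n # xs) r \<Longrightarrow> reval g (n # r # xs) y
     \<Longrightarrow> reval (Prim f g) (Suc n # xs) y"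
| reval_mn: "reval f (y # xs) 0 \<Longrightarrow> (\<forall>z<y. \<exists>w. w \<noteq> 0 \<and> reval f (z # xs) w)
     \<Longrightarrow> reval (Mn f) xs y"

definition ce :: "nat set \<Rightarrow> bool" where
  "ce X \<longleftrightarrow> (\<exists>f. \<forall>x. x \<in> X \<longleftrightarrow> (\<exists>y. reval f [x] y))"

datatype atom = Lt nat nat | Eq nat nat
datatype lit = Pos atom | Neg atom

fun atom_code :: "atom \<Rightarrow> nat" where
  "atom_code (Lt a b) = prod_encode (0, prod_encode (a, b))"
| "atom_code (Eq a b) = prod_encode (1, prod_encode (a, b))"

fun lit_code :: "lit \<Rightarrow> nat" where
  "lit_code (Pos a) = prod_encode (0, atom_code a)"
| "lit_code (Neg a) = prod_encode (1, atom_code a)"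

type_synonym 'a struc = "'a set \<times> ('a \<times> 'a) set"

definition wf_struc :: "'a struc \<Rightarrow> bool" where
  "wf_struc S \<longleftrightarrow> snd S \<subseteq> fst S \<times> fst S"

definition iso :: "'a struc \<Rightarrow> 'b struc \<Rightarrow> bool" where
  "iso S T \<longleftrightarrow> (\<exists>f. bij_betw f (fst S) (fst T) \<and>
     (\<forall>a\<in>fst S. \<forall>b\<in>fst S. (a, b) \<in> snd S \<longleftrightarrow> (f a, f b) \<in> snd T))"

definition diag :: "nat struc \<Rightarrow> lit set" where
  "diag S = {Pos (Lt a b) | a b. a \<in> fst S \<and> b \<in> fst S \<and> (a, b) \<in> snd S}
          \<union> {Neg (Lt a b) | a b. a \<in> fst S \<and> b \<in> fst S \<and> (a, b) \<notin> snd S}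
          \<union> {Pos (Eq a a) | a. a \<in> fst S}
          \<union> {Neg (Eq a b) | a b. a \<in> fst S \<and> b \<in> fst S \<and> a \<noteq> b}"

text \<open>The order type omega^m: length-m sequences of naturals, lexicographic order
  (first coordinate most significant).\<close>
definition omega_pow :: "nat \<Rightarrow> nat list struc" where
  "omega_pow m = ({xs. length xs = m},
     {(xs, ys). length xs = m \<and> length ys = m \<and> (xs, ys) \<in> lex less_than})"

definition rev_order :: "'a struc \<Rightarrow> 'a struc" where
  "rev_order S = (fst S, (snd S)\<inverse>)"

definition two_class :: "'a struc \<Rightarrow> 'b struc \<Rightarrow> nat struc set" where
  "two_class A B = {S. wf_struc S \<and> (iso S A \<or> iso S B)}"

definition enum_op :: "(lit set \<times> lit) set \<Rightarrow> bool" where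
  "enum_op \<Gamma> \<longleftrightarrow> (\<forall>(\<alpha>, \<phi>) \<in> \<Gamma>. finite \<alpha>) \<and>
     ce ((\<lambda>(\<alpha>, \<phi>). prod_encode (set_encode (lit_code ` \<alpha>), lit_code \<phi>)) ` \<Gamma>)"

definition apply_op :: "(lit set \<times> lit) set \<Rightarrow> lit set \<Rightarrow> lit set" where
  "apply_op \<Gamma> X = {\<phi>. \<exists>\<alpha>. (\<alpha>, \<phi>) \<in> \<Gamma> \<and> \<alpha> \<subseteq> X}"

definition comp_embeds :: "nat struc set \<Rightarrow> nat struc set \<Rightarrow> bool" where
  "comp_embeds K0 K1 \<longleftrightarrow> (\<exists>\<Gamma>. enum_op \<Gamma> \<and>
     (\<forall>A\<in>K0. \<exists>B\<in>K1. apply_op \<Gamma> (diag A) = diag B) \<and>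
     (\<forall>A\<in>K0. \<forall>A'\<in>K0. \<forall>B\<in>K1. \<forall>B'\<in>K1.
        apply_op \<Gamma> (diag A) = diag B \<longrightarrow> apply_op \<Gamma> (diag A') = diag B' \<longrightarrow>
        (iso A A' \<longleftrightarrow> iso B B')))"

end

theory Submission
  imports Defs
begin

(* For a linear order A with domain contained in omega, let C(A) (bracket_struc A) consist of the
   codes <a, b> with a in A and b lying strictly between two elements of A that are numerically at
   most a, ordered lexicographically by (a, b). Every atomic fact about C(A) is witnessed,
   uniformly, by finitely many atomic facts about A, so A |-> C(A) is given by an enumeration
   operator; C also commutes with reversing the order. The operator is c.e. because the codes of
   its pairs are exactly the x for which some y makes a fixed arithmetic expression (with bounded
   sums and products) vanish at (y, x), and such an expression compiles to a recursive function
   whose minimisation halts exactly on these x.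

   If A is a copy of omega^n, the elements b belonging to a fixed a lie below one of finitely many
   elements of A, so their leading coordinates are bounded. Stretching the last coordinate of a
   accordingly embeds C(A) into omega^(2n-1); conversely, sending a sequence of length 2n-1 to its
   first n entries (with the leading one raised) paired with its last n-1 entries (prefixed by 1)
   embeds omega^(2n-1) into C(A). Well orders embedding into each other are isomorphic, so C(A) is
   a copy of omega^(2n-1), and a copy of its reverse if A is a copy of the reverse of omega^n. As
   omega^m has a least but no greatest element, it is not isomorphic to its reverse, so C preserves
   and reflects isomorphism on the two classes. *)

section \<open>Computable total functions\<close>

definition computes :: "recf \<Rightarrow> nat \<Rightarrow> (nat list \<Rightarrow> nat) \<Rightarrow> bool" where
  "computes r k F \<longleftrightarrow> (\<forall>xs y. length xs = k \<longrightarrow> (reval r xs y \<longleftrightarrow> y = F xs))"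

inductive_cases reval_ZeroE: "reval Zero xs y"
inductive_cases reval_SuccE: "reval Succ xs y"
inductive_cases reval_ProjE: "reval (Proj i) xs y"
inductive_cases reval_CompE: "reval (Comp f gs) xs y"
inductive_cases reval_Prim0E: "reval (Prim f g) (0 # xs) y"
inductive_cases reval_PrimSucE: "reval (Prim f g) (Suc n # xs) y"
inductive_cases reval_MnE: "reval (Mn f) xs y"

lemma computes_cong:
  "computes r k F \<Longrightarrow> (\<And>xs. length xs = k \<Longrightarrow> F xs = G xs) \<Longrightarrow> computes r k G"
  unfolding computes_def by auto

lemma computes_Proj: "i < k \<Longrightarrow> computes (Proj i) k (\<lambda>xs. xs ! i)"
  unfolding computes_def by (auto elim: reval_ProjE intro: reval_proj)

lemma computes_Succ: "computes Succ 1 (\<lambda>xs. Suc (hd xs))"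
  unfolding computes_def by (auto elim!: reval_SuccE simp: length_Suc_conv intro: reval_succ)

lemma reval_list_iff:
  assumes "list_all2 (\<lambda>g G. computes g k G) gs Gs" and "length xs = k"
  shows "list_all2 (\<lambda>g y. reval g xs y) gs ys \<longleftrightarrow> ys = map (\<lambda>G. G xs) Gs"
  using assms(1)
proof (induction gs Gs arbitrary: ys rule: list_all2_induct)
  case (Cons g gs G Gs)
  then show ?case
    using assms(2) by (cases ys) (auto simp: computes_def)
qed simp

lemma computes_Comp:
  assumes "computes f (length gs) F" and "list_all2 (\<lambda>g G. computes g k G) gs Gs"
  shows "computes (Comp f gs) k (\<lambda>xs. F (map (\<lambda>G. G xs) Gs))"
  unfolding computes_def
proof (intro allI impI)
  fix xs :: "nat list" and y
  assume "length xs = k"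
  note args = reval_list_iff[OF assms(2) this]
  have "length (map (\<lambda>G. G xs) Gs) = length gs"
    using list_all2_lengthD[OF assms(2)] by simp
  then show "reval (Comp f gs) xs y \<longleftrightarrow> y = F (map (\<lambda>G. G xs) Gs)"
    using assms(1) args unfolding computes_def by (auto elim!: reval_CompE intro: reval_comp)
qed

lemma computes_Comp_Nil: "computes f 0 F \<Longrightarrow> computes (Comp f []) k (\<lambda>_. F [])"
  using computes_Comp[of f "[]"] by simp

lemma computes_Comp1:
  "computes f 1 F \<Longrightarrow> computes g k G \<Longrightarrow> computes (Comp f [g]) k (\<lambda>xs. F [G xs])"
  using computes_Comp[of f "[g]" F k "[G]"] by simp

lemma computes_Comp2:
  "computes f 2 F \<Longrightarrow> computes g k G \<Longrightarrow> computes h k H \<Longrightarrow>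
    computes (Comp f [g, h]) k (\<lambda>xs. F [G xs, H xs])"
  using computes_Comp[of f "[g, h]" F k "[G, H]"] by (simp add: numeral_2_eq_2)

lemma computes_zero: "computes (Comp Zero []) k (\<lambda>_. 0)"
proof -
  have "computes Zero 0 (\<lambda>_. 0)"
    unfolding computes_def by (auto elim: reval_ZeroE intro: reval_zero)
  then show ?thesis by (rule computes_Comp_Nil)
qed

lemma computes_Prim:
  assumes f: "computes f k F" and g: "computes g (Suc (Suc k)) G"
  shows "computes (Prim f g) (Suc k) (\<lambda>xs. rec_nat (F (tl xs)) (\<lambda>n r. G (n # r # tl xs)) (hd xs))"
proof -
  have "reval (Prim f g) (n # ys) y \<longleftrightarrow> y = rec_nat (F ys) (\<lambda>n r. G (n # r # ys)) n"
    if "length ys = k" for n ys y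
    using that
  proof (induction n arbitrary: y)
    case 0
    then show ?case
      using f unfolding computes_def by (auto elim: reval_Prim0E intro: reval_prim0)
  next
    case (Suc n)
    then show ?case
      using g unfolding computes_def by (auto elim!: reval_PrimSucE intro: reval_primS)
  qed
  then show ?thesis
    unfolding computes_def by (auto simp: length_Suc_conv)
qed

lemma reval_Mn_iff:
  assumes "computes f (Suc k) F" and "length xs = k"
  shows "reval (Mn f) xs y \<longleftrightarrow> F (y # xs) = 0 \<and> (\<forall>z<y. F (z # xs) \<noteq> 0)"
  using assms unfolding computes_def by (auto elim!: reval_MnE intro!: reval_mn)

definition add_rf :: recf where "add_rf = Prim (Proj 0) (Comp Succ [Proj 1])"
definition mul_rf :: recf where "mul_rf = Prim (Comp Zero []) (Comp add_rf [Proj 1, Proj 2])"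
definition pred_rf :: recf where "pred_rf = Prim (Comp Zero []) (Proj 0)"
definition sub_rf :: recf where "sub_rf = Prim (Proj 0) (Comp pred_rf [Proj 1])"

lemma computes_add_rf: "computes add_rf 2 (\<lambda>xs. xs ! 0 + xs ! 1)"
proof -
  have rec: "rec_nat b (\<lambda>_ r. Suc r) a = a + b" for a b :: nat
    by (induction a) simp_all
  have "computes add_rf 2 (\<lambda>xs. rec_nat (tl xs ! 0) (\<lambda>_ r. Suc r) (hd xs))"
    using computes_Prim[OF computes_Proj[of 0 "Suc 0"]
        computes_Comp1[OF computes_Succ computes_Proj[of 1 "Suc (Suc (Suc 0))"]]]
    by (simp add: add_rf_def numeral_2_eq_2 numeral_3_eq_3)
  then show ?thesis
    by (rule computes_cong) (auto simp: rec numeral_2_eq_2 length_Suc_conv)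
qed

lemma computes_mul_rf: "computes mul_rf 2 (\<lambda>xs. xs ! 0 * xs ! 1)"
proof -
  have rec: "rec_nat 0 (\<lambda>_ r. r + b) a = a * b" for a b :: nat
    by (induction a) simp_all
  have "computes mul_rf 2 (\<lambda>xs. rec_nat 0 (\<lambda>_ r. r + tl xs ! 0) (hd xs))"
    using computes_Prim[OF computes_zero
        computes_Comp2[OF computes_add_rf computes_Proj[of 1 "Suc (Suc (Suc 0))"]
          computes_Proj[of 2 "Suc (Suc (Suc 0))"]]]
    by (simp add: mul_rf_def numeral_2_eq_2 numeral_3_eq_3)
  then show ?thesis
    by (rule computes_cong) (auto simp: rec numeral_2_eq_2 length_Suc_conv)
qed

lemma computes_pred_rf: "computes pred_rf 1 (\<lambda>xs. xs ! 0 - 1)"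
proof -
  have rec: "rec_nat 0 (\<lambda>n _. n) a = a - 1" for a :: nat
    by (cases a) simp_all
  have "computes pred_rf 1 (\<lambda>xs. rec_nat 0 (\<lambda>n _. n) (hd xs))"
    using computes_Prim[OF computes_zero computes_Proj[of 0 "Suc (Suc 0)"]]
    by (simp add: pred_rf_def)
  then show ?thesis
    by (rule computes_cong) (auto simp: rec length_Suc_conv)
qed

lemma computes_sub_rf: "computes sub_rf 2 (\<lambda>xs. xs ! 1 - xs ! 0)"
proof -
  have rec: "rec_nat b (\<lambda>_ r. r - 1) a = b - a" for a b :: nat
    by (induction a) simp_all
  have "computes sub_rf 2 (\<lambda>xs. rec_nat (tl xs ! 0) (\<lambda>_ r. r - 1) (hd xs))"
    using computes_Prim[OF computes_Proj[of 0 "Suc 0"]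
        computes_Comp1[OF computes_pred_rf computes_Proj[of 1 "Suc (Suc (Suc 0))"]]]
    by (simp add: sub_rf_def numeral_2_eq_2 numeral_3_eq_3)
  then show ?thesis
    by (rule computes_cong) (auto simp: rec[simplified] numeral_2_eq_2 length_Suc_conv)
qed

section \<open>Arithmetic expressions with bounded sums and products\<close>

text \<open>Variables are de Bruijn indices: in \<open>ASum b e\<close> and \<open>AProd b e\<close> the bound variable
  is \<open>AVar 0\<close> in \<open>e\<close> and the outer variables are shifted by one.\<close>

datatype aexp = AVar nat | AConst nat | AAdd aexp aexp | AMul aexp aexp | ASub aexp aexp
  | ASum aexp aexp | AProd aexp aexp

fun aval :: "aexp \<Rightarrow> nat list \<Rightarrow> nat" where
  "aval (AVar i) xs = (if i < length xs then xs ! i else 0)"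
| "aval (AConst c) xs = c"
| "aval (AAdd a b) xs = aval a xs + aval b xs"
| "aval (AMul a b) xs = aval a xs * aval b xs"
| "aval (ASub a b) xs = aval a xs - aval b xs"
| "aval (ASum b e) xs = (\<Sum>j<aval b xs. aval e (j # xs))"
| "aval (AProd b e) xs = (\<Prod>j<aval b xs. aval e (j # xs))"

fun aclosed :: "nat \<Rightarrow> aexp \<Rightarrow> bool" where
  "aclosed k (AVar i) \<longleftrightarrow> i < k"
| "aclosed k (AConst c) \<longleftrightarrow> True"
| "aclosed k (AAdd a b) \<longleftrightarrow> aclosed k a \<and> aclosed k b"
| "aclosed k (AMul a b) \<longleftrightarrow> aclosed k a \<and> aclosed k b"
| "aclosed k (ASub a b) \<longleftrightarrow> aclosed k a \<and> aclosed k b"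
| "aclosed k (ASum b e) \<longleftrightarrow> aclosed k b \<and> aclosed (Suc k) e"
| "aclosed k (AProd b e) \<longleftrightarrow> aclosed k b \<and> aclosed (Suc k) e"

fun const_rf :: "nat \<Rightarrow> recf" where
  "const_rf 0 = Comp Zero []"
| "const_rf (Suc c) = Comp Succ [const_rf c]"

lemma computes_const_rf: "computes (const_rf c) k (\<lambda>_. c)"
proof (induction c)
  case (Suc c)
  from computes_Comp1[OF computes_Succ this] show ?case by simp
qed (simp add: computes_zero)

definition env_rf :: "nat \<Rightarrow> recf list" where
  "env_rf k = Proj 0 # map (\<lambda>i. Proj (i + 2)) [0..<k]"

lemma computes_Comp_env_rf:
  assumes "computes e (Suc k) E"
  shows "computes (Comp e (env_rf k)) (Suc (Suc k)) (\<lambda>ys. E (ys ! 0 # drop 2 ys))"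
proof -
  let ?Gs = "(\<lambda>ys. ys ! 0) # map (\<lambda>i ys. ys ! (i + 2)) [0..<k]"
  have "computes e (length (env_rf k)) E"
    using assms by (simp add: env_rf_def)
  moreover have "list_all2 (\<lambda>g G. computes g (Suc (Suc k)) G) (env_rf k) ?Gs"
    unfolding env_rf_def by (auto simp: list_all2_conv_all_nth nth_Cons' intro: computes_Proj)
  ultimately have "computes (Comp e (env_rf k)) (Suc (Suc k)) (\<lambda>ys. E (map (\<lambda>G. G ys) ?Gs))"
    by (rule computes_Comp)
  then show ?thesis
  proof (rule computes_cong)
    fix ys :: "nat list"
    assume "length ys = Suc (Suc k)"
    then have "map (\<lambda>i. ys ! (i + 2)) [0..<k] = drop 2 ys"
      by (intro nth_equalityI) (auto simp: add.commute)
    then show "E (map (\<lambda>G. G ys) ?Gs) = E (ys ! 0 # drop 2 ys)"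
      by (simp add: comp_def)
  qed
qed

definition iter_rf :: "nat \<Rightarrow> recf \<Rightarrow> recf \<Rightarrow> recf \<Rightarrow> nat \<Rightarrow> recf" where
  "iter_rf z c e b k =
     Comp (Prim (const_rf z) (Comp c [Proj 1, Comp e (env_rf k)])) (b # map Proj [0..<k])"

lemma computes_iter_rf:
  assumes c: "computes c 2 (\<lambda>vs. h (vs ! 0) (vs ! 1))"
    and e: "computes e (Suc k) E" and b: "computes b k B"
  shows "computes (iter_rf z c e b k) k (\<lambda>xs. rec_nat z (\<lambda>j r. h r (E (j # xs))) (B xs))"
proof -
  have "computes (Comp c [Proj 1, Comp e (env_rf k)]) (Suc (Suc k))
      (\<lambda>ys. h (ys ! 1) (E (ys ! 0 # drop 2 ys)))"
    using computes_Comp2[OF c computes_Proj computes_Comp_env_rf[OF e]] by simp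
  from computes_Prim[OF computes_const_rf this]
  have "computes (Prim (const_rf z) (Comp c [Proj 1, Comp e (env_rf k)]))
      (length (b # map Proj [0..<k])) (\<lambda>xs. rec_nat z (\<lambda>j r. h r (E (j # tl xs))) (hd xs))"
    by simp
  moreover have "list_all2 (\<lambda>g G. computes g k G)
      (b # map Proj [0..<k]) (B # map (\<lambda>i xs. xs ! i) [0..<k])"
    using b by (auto simp: list_all2_conv_all_nth nth_Cons' intro: computes_Proj)
  ultimately show ?thesis
    unfolding iter_rf_def
    by (rule computes_Comp[THEN computes_cong]) (simp add: comp_def; metis map_nth)
qed

fun compile :: "aexp \<Rightarrow> nat \<Rightarrow> recf" where
  "compile (AVar i) k = Proj i"
| "compile (AConst c) k = const_rf c"
| "compile (AAdd a b) k = Comp add_rf [compile a k, compile b k]"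
| "compile (AMul a b) k = Comp mul_rf [compile a k, compile b k]"
| "compile (ASub a b) k = Comp sub_rf [compile b k, compile a k]"
| "compile (ASum b e) k = iter_rf 0 add_rf (compile e (Suc k)) (compile b k) k"
| "compile (AProd b e) k = iter_rf 1 mul_rf (compile e (Suc k)) (compile b k) k"

lemma computes_compile: "aclosed k e \<Longrightarrow> computes (compile e k) k (aval e)"
proof (induction e arbitrary: k)
  case (AVar i)
  then show ?case by (auto intro: computes_cong[OF computes_Proj])
next
  case (AConst c)
  show ?case using computes_const_rf[of c k] by (simp add: computes_def)
next
  case (ASum b e)
  have "rec_nat 0 (\<lambda>j r. r + f j) m = (\<Sum>j<m. f j)" for f :: "nat \<Rightarrow> nat" and m
    by (induction m) simp_all
  then show ?case
    using ASum
      computes_iter_rf[OF computes_add_rf, of "compile e (Suc k)" k "aval e" "compile b k" "aval b" 0]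
    by simp
next
  case (AProd b e)
  have "rec_nat 1 (\<lambda>j r. r * f j) m = (\<Prod>j<m. f j)" for f :: "nat \<Rightarrow> nat" and m
    by (induction m) (simp_all add: mult.commute)
  then show ?case
    using AProd
      computes_iter_rf[OF computes_mul_rf, of "compile e (Suc k)" k "aval e" "compile b k" "aval b" 1]
    by simp
qed (auto intro!: computes_Comp2[OF computes_add_rf, THEN computes_cong]
    computes_Comp2[OF computes_mul_rf, THEN computes_cong]
    computes_Comp2[OF computes_sub_rf, THEN computes_cong])

lemma ce_if_aexp_zero_projection:
  assumes "aclosed 2 T" and "\<And>x. x \<in> X \<longleftrightarrow> (\<exists>y. aval T [y, x] = 0)"
  shows "ce X"
  unfolding ce_def
proof (intro exI allI)
  fix x
  have T: "computes (compile T 2) (Suc 1) (aval T)"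
    using computes_compile[OF assms(1)] by (simp add: numeral_2_eq_2)
  have "(\<exists>y. reval (Mn (compile T 2)) [x] y) \<longleftrightarrow> (\<exists>y. aval T [y, x] = 0)"
  proof
    assume "\<exists>y. aval T [y, x] = 0"
    then have "\<exists>y. aval T [y, x] = 0 \<and> (\<forall>z<y. aval T [z, x] \<noteq> 0)"
      using exists_least_iff[of "\<lambda>y. aval T [y, x] = 0"] by blast
    then show "\<exists>y. reval (Mn (compile T 2)) [x] y"
      using reval_Mn_iff[OF T] by auto
  qed (use reval_Mn_iff[OF T] in auto)
  then show "x \<in> X \<longleftrightarrow> (\<exists>y. reval (Mn (compile T 2)) [x] y)"
    using assms(2) by simp
qed

fun ashift :: "nat \<Rightarrow> aexp \<Rightarrow> aexp" where
  "ashift k (AVar i) = AVar (if i < k then i else Suc i)"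
| "ashift k (AConst c) = AConst c"
| "ashift k (AAdd a b) = AAdd (ashift k a) (ashift k b)"
| "ashift k (AMul a b) = AMul (ashift k a) (ashift k b)"
| "ashift k (ASub a b) = ASub (ashift k a) (ashift k b)"
| "ashift k (ASum b e) = ASum (ashift k b) (ashift (Suc k) e)"
| "ashift k (AProd b e) = AProd (ashift k b) (ashift (Suc k) e)"

lemma aval_ashift: "k \<le> length xs \<Longrightarrow> aval (ashift k e) (take k xs @ j # drop k xs) = aval e xs"
proof (induction e arbitrary: k xs)
  case (AVar i)
  then show ?case by (auto simp: nth_append min_def nth_Cons')
next
  case (ASum b e)
  then show ?case using ASum.IH(2)[of "Suc k" "_ # xs"] by simp
next
  case (AProd b e)
  then show ?case using AProd.IH(2)[of "Suc k" "_ # xs"] by simp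
qed simp_all

lemma aval_ashift0 [simp]: "aval (ashift 0 e) (j # xs) = aval e xs"
  using aval_ashift[of 0 xs e j] by simp

lemma aclosed_ashift: "aclosed k e \<Longrightarrow> aclosed (Suc k) (ashift j e)"
  by (induction e arbitrary: k j) auto

definition ale :: "aexp \<Rightarrow> aexp \<Rightarrow> aexp" where "ale a b = ASub (AConst 1) (ASub a b)"
definition aeq :: "aexp \<Rightarrow> aexp \<Rightarrow> aexp" where "aeq a b = AMul (ale a b) (ale b a)"
definition anot :: "aexp \<Rightarrow> aexp" where "anot a = ASub (AConst 1) a"
definition atriangle :: "aexp \<Rightarrow> aexp" where "atriangle a = ASum a (AAdd (AVar 0) (AConst 1))"
definition apair :: "aexp \<Rightarrow> aexp \<Rightarrow> aexp" where "apair a b = AAdd (atriangle (AAdd a b)) a"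
definition apow2 :: "aexp \<Rightarrow> aexp" where "apow2 a = AProd a (AConst 2)"

text \<open>The sum of the components of \<open>prod_decode k\<close> is the number of \<open>j < k\<close> with
  \<open>triangle (j + 1) \<le> k\<close>, which makes unpairing expressible.\<close>

definition adecode_sum :: "aexp \<Rightarrow> aexp" where
  "adecode_sum a = ASum a (ale (atriangle (AAdd (AVar 0) (AConst 1))) (ashift 0 a))"
definition afst :: "aexp \<Rightarrow> aexp" where "afst a = ASub a (atriangle (adecode_sum a))"
definition asnd :: "aexp \<Rightarrow> aexp" where "asnd a = ASub (adecode_sum a) (afst a)"

lemma aval_ale [simp]: "aval (ale a b) xs = (if aval a xs \<le> aval b xs then 1 else 0)"
  by (simp add: ale_def)

lemma aval_aeq [simp]: "aval (aeq a b) xs = (if aval a xs = aval b xs then 1 else 0)"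
  by (simp add: aeq_def)

lemma aval_anot [simp]: "aval (anot a) xs = 1 - aval a xs"
  by (simp add: anot_def)

lemma aval_atriangle [simp]: "aval (atriangle a) xs = triangle (aval a xs)"
proof -
  have "(\<Sum>j<n. Suc j) = triangle n" for n
    by (induction n) simp_all
  then show ?thesis by (simp add: atriangle_def)
qed

lemma aval_apair [simp]: "aval (apair a b) xs = prod_encode (aval a xs, aval b xs)"
  by (simp add: apair_def prod_encode_def)

lemma aval_apow2 [simp]: "aval (apow2 a) xs = 2 ^ aval a xs"
  by (simp add: apow2_def)

lemma triangle_mono: "m \<le> n \<Longrightarrow> triangle m \<le> triangle n"
  by (induction n) (auto simp: le_Suc_eq)

lemma sum_triangle_le_eq:
  "(\<Sum>j<k. if triangle (Suc j) \<le> k then 1 else 0) = fst (prod_decode k) + snd (prod_decode k)"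
proof -
  obtain m n where mn: "prod_decode k = (m, n)"
    by fastforce
  have k: "k = triangle (m + n) + m"
    using prod_decode_inverse[of k] mn by (simp add: prod_encode_def)
  have below: "triangle (Suc j) \<le> k \<longleftrightarrow> j < m + n" for j
  proof
    assume le: "triangle (Suc j) \<le> k"
    show "j < m + n"
    proof (rule ccontr)
      assume "\<not> j < m + n"
      then have "triangle (Suc (m + n)) \<le> triangle (Suc j)"
        by (intro triangle_mono) simp
      then show False
        using le k by simp
    qed
  next
    assume "j < m + n"
    then show "triangle (Suc j) \<le> k"
      using triangle_mono[of "Suc j" "m + n"] k by simp
  qed
  have "i \<le> triangle i" for i
    by (induction i) simp_all
  then have "m + n \<le> k"
    using k by (metis le_add1 le_trans)
  then have "{j. j < k \<and> j < m + n} = {..<m + n}"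
    by auto
  then show ?thesis
    using below mn by (simp add: sum.If_cases Int_def)
qed

lemma aval_adecode_sum [simp]:
  "aval (adecode_sum a) xs = fst (prod_decode (aval a xs)) + snd (prod_decode (aval a xs))"
  using sum_triangle_le_eq[of "aval a xs"] by (simp add: adecode_sum_def del: triangle_Suc)

lemma aval_afst [simp]: "aval (afst a) xs = fst (prod_decode (aval a xs))"
proof -
  obtain m n where "prod_decode (aval a xs) = (m, n)"
    by fastforce
  moreover from this have "aval a xs = triangle (m + n) + m"
    using prod_decode_inverse[of "aval a xs"] by (simp add: prod_encode_def)
  ultimately show ?thesis
    by (simp add: afst_def)
qed

lemma aval_asnd [simp]: "aval (asnd a) xs = snd (prod_decode (aval a xs))"
  by (simp add: asnd_def)

lemma aclosed_derived [simp]: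
  "aclosed k (ale a b) \<longleftrightarrow> aclosed k a \<and> aclosed k b"
  "aclosed k (aeq a b) \<longleftrightarrow> aclosed k a \<and> aclosed k b"
  "aclosed k (anot a) \<longleftrightarrow> aclosed k a"
  "aclosed k (atriangle a) \<longleftrightarrow> aclosed k a"
  "aclosed k (apair a b) \<longleftrightarrow> aclosed k a \<and> aclosed k b"
  "aclosed k (apow2 a) \<longleftrightarrow> aclosed k a"
  by (auto simp: ale_def aeq_def anot_def atriangle_def apair_def apow2_def)

lemma aclosed_unpair [simp]:
  "aclosed k a \<Longrightarrow> aclosed k (adecode_sum a)"
  "aclosed k a \<Longrightarrow> aclosed k (afst a)"
  "aclosed k a \<Longrightarrow> aclosed k (asnd a)"
  by (simp_all add: adecode_sum_def afst_def asnd_def aclosed_ashift)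

text \<open>The rest \<open>r\<close> makes every number a tuple of any given length.\<close>

definition tuple_code :: "nat list \<Rightarrow> nat \<Rightarrow> nat" where
  "tuple_code ps r = foldr (\<lambda>a r. prod_encode (a, r)) ps r"

definition tuple_nth :: "nat \<Rightarrow> nat \<Rightarrow> nat" where
  "tuple_nth j y = fst (prod_decode (((\<lambda>y. snd (prod_decode y)) ^^ j) y))"

lemma tuple_nth_tuple_code [simp]: "j < length ps \<Longrightarrow> tuple_nth j (tuple_code ps r) = ps ! j"
proof (induction ps arbitrary: j)
  case (Cons a ps)
  then show ?case
    by (cases j) (simp_all add: tuple_nth_def tuple_code_def funpow_Suc_right del: funpow.simps)
qed simp

lemma ex_tuple_code: "(\<exists>y. R y) \<longleftrightarrow> (\<exists>ps r. length ps = n \<and> R (tuple_code ps r))"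
proof -
  have "\<exists>ps r. length ps = n \<and> y = tuple_code ps r" for y
  proof (induction n arbitrary: y)
    case (Suc n)
    obtain a y' where "y = prod_encode (a, y')"
      by (metis prod_decode_inverse surj_pair)
    with Suc[of y'] show ?case
      by (metis length_Cons foldr_Cons o_apply tuple_code_def)
  qed (simp add: tuple_code_def)
  then show ?thesis
    by metis
qed

lemma ex_tuple_code8:
  "(\<exists>y. R y) \<longleftrightarrow> (\<exists>a b c d e f g h r. R (tuple_code [a, b, c, d, e, f, g, h] r))"
proof
  assume "\<exists>y. R y"
  then obtain ps r where "length ps = 8" "R (tuple_code ps r)"
    using ex_tuple_code by metis
  then show "\<exists>a b c d e f g h r. R (tuple_code [a, b, c, d, e, f, g, h] r)"
    by (auto simp: numeral_eq_Suc length_Suc_conv; blast)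
qed blast

fun asnd_iter :: "nat \<Rightarrow> aexp \<Rightarrow> aexp" where
  "asnd_iter 0 y = y"
| "asnd_iter (Suc j) y = asnd_iter j (asnd y)"

definition aparam :: "nat \<Rightarrow> aexp" where
  "aparam j = afst (asnd_iter j (AVar 0))"

lemma aval_aparam [simp]: "aval (aparam j) (y # xs) = tuple_nth j y"
proof -
  have "aval (afst (asnd_iter j e)) xs = tuple_nth j (aval e xs)" for e xs
    by (induction j arbitrary: e) (simp_all add: tuple_nth_def funpow_Suc_right del: funpow.simps)
  then show ?thesis
    unfolding aparam_def by simp
qed

lemma aclosed_aparam [simp]: "0 < k \<Longrightarrow> aclosed k (aparam j)"
proof -
  have "aclosed k e \<Longrightarrow> aclosed k (asnd_iter j e)" for e
    by (induction j arbitrary: e) simp_all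
  then show "0 < k \<Longrightarrow> aclosed k (aparam j)"
    unfolding aparam_def by simp
qed

fun anotin :: "aexp \<Rightarrow> aexp list \<Rightarrow> aexp" where
  "anotin c [] = AConst 1"
| "anotin c (d # ds) = AMul (anot (aeq c d)) (anotin c ds)"

fun aset :: "aexp list \<Rightarrow> aexp" where
  "aset [] = AConst 0"
| "aset (c # cs) = AAdd (AMul (anotin c cs) (apow2 c)) (aset cs)"

lemma aval_anotin: "aval (anotin c ds) xs = (if aval c xs \<in> (\<lambda>d. aval d xs) ` set ds then 0 else 1)"
  by (induction ds) auto

lemma aval_aset [simp]: "aval (aset cs) xs = set_encode ((\<lambda>c. aval c xs) ` set cs)"
  by (induction cs) (auto simp: aval_anotin set_encode_insert insert_absorb)

lemma aclosed_aset [simp]: "(\<forall>c\<in>set cs. aclosed k c) \<Longrightarrow> aclosed k (aset cs)"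
proof (induction cs)
  case (Cons c cs)
  have "aclosed k (anotin c ds)" if "\<forall>d\<in>set ds. aclosed k d" for ds
    using that Cons.prems by (induction ds) auto
  with Cons show ?case by simp
qed simp

section \<open>The bracket construction and its enumeration operator\<close>

abbreviation pcode :: "nat \<Rightarrow> nat \<Rightarrow> nat" where
  "pcode a b \<equiv> prod_encode (a, b)"

definition bracketed :: "nat struc \<Rightarrow> nat \<Rightarrow> nat \<Rightarrow> bool" where
  "bracketed A a b \<longleftrightarrow> a \<in> fst A \<and> (\<exists>z z'. z \<le> a \<and> z' \<le> a \<and> (z, b) \<in> snd A \<and> (b, z') \<in> snd A)"

definition bracket_struc :: "nat struc \<Rightarrow> nat struc" where
  "bracket_struc A =
     ({pcode a b | a b. bracketed A a b},
      {(pcode a b, pcode a' b') | a b a' b'. bracketed A a b \<and> bracketed A a' b' \<and>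
         ((a, a') \<in> snd A \<or> a = a' \<and> (b, b') \<in> snd A)})"

definition bracket_lits :: "nat \<Rightarrow> nat \<Rightarrow> nat \<Rightarrow> nat \<Rightarrow> lit list" where
  "bracket_lits a b z z' = [Pos (Eq a a), Pos (Lt z b), Pos (Lt b z')]"

inductive_set bracket_op :: "(lit set \<times> lit) set" where
  eq: "z \<le> a \<Longrightarrow> z' \<le> a \<Longrightarrow>
    (set (bracket_lits a b z z'), Pos (Eq (pcode a b) (pcode a b))) \<in> bracket_op"
| neq: "z \<le> a \<Longrightarrow> z' \<le> a \<Longrightarrow> w \<le> a' \<Longrightarrow> w' \<le> a' \<Longrightarrow> (a, b) \<noteq> (a', b') \<Longrightarrow>
    (set (bracket_lits a b z z' @ bracket_lits a' b' w w'), Neg (Eq (pcode a b) (pcode a' b')))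
      \<in> bracket_op"
| lt_fst: "z \<le> a \<Longrightarrow> z' \<le> a \<Longrightarrow> w \<le> a' \<Longrightarrow> w' \<le> a' \<Longrightarrow>
    (set (bracket_lits a b z z' @ bracket_lits a' b' w w' @ [Pos (Lt a a')]),
      Pos (Lt (pcode a b) (pcode a' b'))) \<in> bracket_op"
| lt_snd: "z \<le> a \<Longrightarrow> z' \<le> a \<Longrightarrow> w \<le> a \<Longrightarrow> w' \<le> a \<Longrightarrow>
    (set (bracket_lits a b z z' @ bracket_lits a b' w w' @ [Pos (Lt b b')]),
      Pos (Lt (pcode a b) (pcode a b'))) \<in> bracket_op"
| nlt_fst: "z \<le> a \<Longrightarrow> z' \<le> a \<Longrightarrow> w \<le> a' \<Longrightarrow> w' \<le> a' \<Longrightarrow>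
    (set (bracket_lits a b z z' @ bracket_lits a' b' w w' @ [Pos (Lt a' a)]),
      Neg (Lt (pcode a b) (pcode a' b'))) \<in> bracket_op"
| nlt_snd: "z \<le> a \<Longrightarrow> z' \<le> a \<Longrightarrow> w \<le> a \<Longrightarrow> w' \<le> a \<Longrightarrow>
    (set (bracket_lits a b z z' @ bracket_lits a b' w w' @ [Pos (Lt b' b)]),
      Neg (Lt (pcode a b) (pcode a b'))) \<in> bracket_op"
| nlt_refl: "z \<le> a \<Longrightarrow> z' \<le> a \<Longrightarrow>
    (set (bracket_lits a b z z'), Neg (Lt (pcode a b) (pcode a b))) \<in> bracket_op"

lemma diag_iff:
  "Pos (Lt u v) \<in> diag S \<longleftrightarrow> u \<in> fst S \<and> v \<in> fst S \<and> (u, v) \<in> snd S"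
  "Neg (Lt u v) \<in> diag S \<longleftrightarrow> u \<in> fst S \<and> v \<in> fst S \<and> (u, v) \<notin> snd S"
  "Pos (Eq u v) \<in> diag S \<longleftrightarrow> u = v \<and> u \<in> fst S"
  "Neg (Eq u v) \<in> diag S \<longleftrightarrow> u \<in> fst S \<and> v \<in> fst S \<and> u \<noteq> v"
  unfolding diag_def by auto

lemma bracket_lits_subset_diag:
  "wf_struc A \<Longrightarrow>
    set (bracket_lits a b z z') \<subseteq> diag A \<longleftrightarrow> a \<in> fst A \<and> (z, b) \<in> snd A \<and> (b, z') \<in> snd A"
  unfolding bracket_lits_def wf_struc_def by (auto simp: diag_iff)

lemma bracketed_iff_lits:
  "wf_struc A \<Longrightarrow>
    bracketed A a b \<longleftrightarrow> (\<exists>z z'. z \<le> a \<and> z' \<le> a \<and> set (bracket_lits a b z z') \<subseteq> diag A)"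
  by (auto simp: bracket_lits_subset_diag bracketed_def)

lemma bracketed_in_fst: "wf_struc A \<Longrightarrow> bracketed A a b \<Longrightarrow> a \<in> fst A \<and> b \<in> fst A"
  unfolding bracketed_def wf_struc_def by auto

lemma bracket_struc_fst: "e \<in> fst (bracket_struc A) \<longleftrightarrow> (\<exists>a b. e = pcode a b \<and> bracketed A a b)"
  unfolding bracket_struc_def by auto

lemma bracket_struc_snd:
  "(pcode a b, pcode a' b') \<in> snd (bracket_struc A) \<longleftrightarrow> bracketed A a b \<and> bracketed A a' b' \<and>
     ((a, a') \<in> snd A \<or> a = a' \<and> (b, b') \<in> snd A)"
  unfolding bracket_struc_def by auto

lemma bracket_struc_sndE:
  assumes "(e, e') \<in> snd (bracket_struc A)"
  obtains a b a' b' where "e = pcode a b" "e' = pcode a' b'" "bracketed A a b" "bracketed A a' b'"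
    "(a, a') \<in> snd A \<or> a = a' \<and> (b, b') \<in> snd A"
  using assms unfolding bracket_struc_def by auto

lemma wf_struc_bracket_struc: "wf_struc (bracket_struc A)"
  unfolding wf_struc_def bracket_struc_def by auto

lemma bracket_struc_rev_order: "bracket_struc (rev_order A) = rev_order (bracket_struc A)"
proof -
  have "bracketed (rev_order A) = bracketed A"
    unfolding bracketed_def rev_order_def by (auto intro!: ext)
  then show ?thesis
    unfolding bracket_struc_def by (auto simp: rev_order_def)
qed

lemma apply_opI: "(\<alpha>, \<phi>) \<in> \<Gamma> \<Longrightarrow> \<alpha> \<subseteq> X \<Longrightarrow> \<phi> \<in> apply_op \<Gamma> X"
  unfolding apply_op_def by blast

lemma bracket_op_sound:
  assumes "wf_struc A" "strict_linear_order_on (fst A) (snd A)"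
    and "\<phi> \<in> apply_op bracket_op (diag A)"
  shows "\<phi> \<in> diag (bracket_struc A)"
proof -
  obtain \<alpha> where "(\<alpha>, \<phi>) \<in> bracket_op" "\<alpha> \<subseteq> diag A"
    using assms(3) unfolding apply_op_def by blast
  moreover have irrefl: "(a, a) \<notin> snd A" and asym: "(a, b) \<in> snd A \<Longrightarrow> (b, a) \<notin> snd A" for a b
    using assms(2) unfolding strict_linear_order_on_def irrefl_def trans_def by blast+
  note simps = diag_iff bracket_struc_fst bracket_struc_snd bracketed_iff_lits[OF assms(1)]
    bracket_lits_subset_diag[OF assms(1)]
  ultimately show ?thesis
    by cases (auto simp: simps irrefl dest: asym; blast)+
qed

lemma diag_bracket_strucE:
  assumes "\<phi> \<in> diag (bracket_struc A)"
  obtains (eq) a b where "\<phi> = Pos (Eq (pcode a b) (pcode a b))" "bracketed A a b"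
  | (neq) a b a' b' where "\<phi> = Neg (Eq (pcode a b) (pcode a' b'))"
      "bracketed A a b" "bracketed A a' b'" "(a, b) \<noteq> (a', b')"
  | (lt) a b a' b' where "\<phi> = Pos (Lt (pcode a b) (pcode a' b'))"
      "bracketed A a b" "bracketed A a' b'" "(a, a') \<in> snd A \<or> a = a' \<and> (b, b') \<in> snd A"
  | (nlt) a b a' b' where "\<phi> = Neg (Lt (pcode a b) (pcode a' b'))"
      "bracketed A a b" "bracketed A a' b'" "\<not> ((a, a') \<in> snd A \<or> a = a' \<and> (b, b') \<in> snd A)"
  using assms unfolding diag_def bracket_struc_def by auto

lemma bracketed_litsE:
  assumes "wf_struc A" "bracketed A a b"
  obtains z z' where "z \<le> a" "z' \<le> a" "set (bracket_lits a b z z') \<subseteq> diag A"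
  using assms bracketed_iff_lits by blast

lemma bracket_op_complete_Eq:
  assumes wf: "wf_struc A" and "bracketed A a b" "bracketed A a' b'"
  shows "Pos (Eq (pcode a b) (pcode a b)) \<in> apply_op bracket_op (diag A)"
    and "(a, b) \<noteq> (a', b') \<Longrightarrow> Neg (Eq (pcode a b) (pcode a' b')) \<in> apply_op bracket_op (diag A)"
proof -
  obtain z z' w w' where z: "z \<le> a" "z' \<le> a" "w \<le> a'" "w' \<le> a'"
    and sub: "set (bracket_lits a b z z') \<subseteq> diag A" "set (bracket_lits a' b' w w') \<subseteq> diag A"
    using bracketed_litsE[OF wf] assms(2,3) by metis
  show "Pos (Eq (pcode a b) (pcode a b)) \<in> apply_op bracket_op (diag A)"
    by (rule apply_opI[OF bracket_op.eq[OF z(1,2)] sub(1)])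
  show "Neg (Eq (pcode a b) (pcode a' b')) \<in> apply_op bracket_op (diag A)" if "(a, b) \<noteq> (a', b')"
    by (rule apply_opI[OF bracket_op.neq[OF z that]]) (use sub in simp)
qed

lemma bracket_op_complete_Lt:
  assumes wf: "wf_struc A" and "bracketed A a b" "bracketed A a' b'"
  shows "(a, a') \<in> snd A \<Longrightarrow> Pos (Lt (pcode a b) (pcode a' b')) \<in> apply_op bracket_op (diag A)"
    and "(a', a) \<in> snd A \<Longrightarrow> Neg (Lt (pcode a b) (pcode a' b')) \<in> apply_op bracket_op (diag A)"
    and "a = a' \<Longrightarrow> (b, b') \<in> snd A \<Longrightarrow>
      Pos (Lt (pcode a b) (pcode a' b')) \<in> apply_op bracket_op (diag A)"
    and "a = a' \<Longrightarrow> (b', b) \<in> snd A \<Longrightarrow>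
      Neg (Lt (pcode a b) (pcode a' b')) \<in> apply_op bracket_op (diag A)"
    and "Neg (Lt (pcode a b) (pcode a b)) \<in> apply_op bracket_op (diag A)"
proof -
  obtain z z' w w' where z: "z \<le> a" "z' \<le> a" "w \<le> a'" "w' \<le> a'"
    and sub: "set (bracket_lits a b z z') \<subseteq> diag A" "set (bracket_lits a' b' w w') \<subseteq> diag A"
    using bracketed_litsE[OF wf] assms(2,3) by metis
  have lt: "(u, v) \<in> snd A \<Longrightarrow> Pos (Lt u v) \<in> diag A" for u v
    using wf unfolding wf_struc_def by (auto simp: diag_iff)
  show "Pos (Lt (pcode a b) (pcode a' b')) \<in> apply_op bracket_op (diag A)" if "(a, a') \<in> snd A"
    by (rule apply_opI[OF bracket_op.lt_fst[OF z]]) (use sub lt[OF that] in simp)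
  show "Neg (Lt (pcode a b) (pcode a' b')) \<in> apply_op bracket_op (diag A)" if "(a', a) \<in> snd A"
    by (rule apply_opI[OF bracket_op.nlt_fst[OF z]]) (use sub lt[OF that] in simp)
  show "Pos (Lt (pcode a b) (pcode a' b')) \<in> apply_op bracket_op (diag A)"
    if "a = a'" "(b, b') \<in> snd A"
    using apply_opI[OF bracket_op.lt_snd[OF z[unfolded that(1)[symmetric]]]] sub lt[OF that(2)]
    unfolding that(1)[symmetric] by simp
  show "Neg (Lt (pcode a b) (pcode a' b')) \<in> apply_op bracket_op (diag A)"
    if "a = a'" "(b', b) \<in> snd A"
    using apply_opI[OF bracket_op.nlt_snd[OF z[unfolded that(1)[symmetric]]]] sub lt[OF that(2)]
    unfolding that(1)[symmetric] by simp
  show "Neg (Lt (pcode a b) (pcode a b)) \<in> apply_op bracket_op (diag A)"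
    by (rule apply_opI[OF bracket_op.nlt_refl[OF z(1,2)] sub(1)])
qed

lemma bracket_op_complete:
  assumes wf: "wf_struc A" and lin: "strict_linear_order_on (fst A) (snd A)"
    and "\<phi> \<in> diag (bracket_struc A)"
  shows "\<phi> \<in> apply_op bracket_op (diag A)"
  using assms(3)
proof (cases rule: diag_bracket_strucE)
  case (nlt a b a' b')
  then have "(a', a) \<in> snd A \<or> a = a' \<and> (b', b) \<in> snd A \<or> a = a' \<and> b = b'"
    using bracketed_in_fst[OF wf] lin unfolding strict_linear_order_on_def total_on_def by metis
  with nlt show ?thesis
    using bracket_op_complete_Lt(2,4,5)[OF wf nlt(2,3)] by blast
qed (use bracket_op_complete_Eq[OF wf] bracket_op_complete_Lt(1,3)[OF wf] in blast)+

definition op_code :: "lit set \<times> lit \<Rightarrow> nat" where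
  "op_code = (\<lambda>(\<alpha>, \<phi>). prod_encode (set_encode (lit_code ` \<alpha>), lit_code \<phi>))"

lemma op_code_set: "op_code (set ls, \<phi>) = prod_encode (set_encode (lit_code ` set ls), lit_code \<phi>)"
  by (simp add: op_code_def)

definition apos_lt :: "aexp \<Rightarrow> aexp \<Rightarrow> aexp" where
  "apos_lt u v = apair (AConst 0) (apair (AConst 0) (apair u v))"
definition apos_eq :: "aexp \<Rightarrow> aexp \<Rightarrow> aexp" where
  "apos_eq u v = apair (AConst 0) (apair (AConst 1) (apair u v))"
definition aneg_lt :: "aexp \<Rightarrow> aexp \<Rightarrow> aexp" where
  "aneg_lt u v = apair (AConst 1) (apair (AConst 0) (apair u v))"
definition aneg_eq :: "aexp \<Rightarrow> aexp \<Rightarrow> aexp" where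
  "aneg_eq u v = apair (AConst 1) (apair (AConst 1) (apair u v))"

lemma aval_alits [simp]:
  "aval (apos_lt u v) xs = lit_code (Pos (Lt (aval u xs) (aval v xs)))"
  "aval (apos_eq u v) xs = lit_code (Pos (Eq (aval u xs) (aval v xs)))"
  "aval (aneg_lt u v) xs = lit_code (Neg (Lt (aval u xs) (aval v xs)))"
  "aval (aneg_eq u v) xs = lit_code (Neg (Eq (aval u xs) (aval v xs)))"
  by (simp_all add: apos_lt_def apos_eq_def aneg_lt_def aneg_eq_def)

lemma aclosed_alits [simp]:
  "aclosed k (apos_lt u v) \<longleftrightarrow> aclosed k u \<and> aclosed k v"
  "aclosed k (apos_eq u v) \<longleftrightarrow> aclosed k u \<and> aclosed k v"
  "aclosed k (aneg_lt u v) \<longleftrightarrow> aclosed k u \<and> aclosed k v"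
  "aclosed k (aneg_eq u v) \<longleftrightarrow> aclosed k u \<and> aclosed k v"
  by (auto simp: apos_lt_def apos_eq_def aneg_lt_def aneg_eq_def)

definition abracket_lits :: "aexp \<Rightarrow> aexp \<Rightarrow> aexp \<Rightarrow> aexp \<Rightarrow> aexp list" where
  "abracket_lits a b z z' = [apos_eq a a, apos_lt z b, apos_lt b z']"

definition abounded :: "aexp \<Rightarrow> aexp \<Rightarrow> aexp \<Rightarrow> aexp" where
  "abounded a z z' = AMul (ale z a) (ale z' a)"

definition afamily :: "aexp list \<Rightarrow> aexp \<Rightarrow> aexp \<Rightarrow> aexp" where
  "afamily W f v = anot (AMul (aeq (AVar 1) (apair (aset W) f)) v)"

lemma aval_afamily_eq_0:
  "aval (afamily W f v) [y, x] = 0 \<longleftrightarrow>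
     x = prod_encode (set_encode ((\<lambda>c. aval c [y, x]) ` set W), aval f [y, x]) \<and> aval v [y, x] \<noteq> 0"
  by (simp add: afamily_def Suc_le_eq)

text \<open>One factor for each rule of \<open>bracket_op\<close>: the product vanishes iff one of them does.\<close>

definition abracket_op :: "aexp \<Rightarrow> aexp \<Rightarrow> aexp \<Rightarrow> aexp \<Rightarrow> aexp \<Rightarrow> aexp \<Rightarrow> aexp \<Rightarrow> aexp \<Rightarrow> aexp"
  where "abracket_op a b z z' a' b' w w' =
    AMul (afamily (abracket_lits a b z z') (apos_eq (apair a b) (apair a b)) (abounded a z z'))
      (AMul (afamily (abracket_lits a b z z' @ abracket_lits a' b' w w')
          (aneg_eq (apair a b) (apair a' b'))
          (AMul (AMul (abounded a z z') (abounded a' w w')) (anot (aeq (apair a b) (apair a' b')))))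
      (AMul (afamily (abracket_lits a b z z' @ abracket_lits a' b' w w' @ [apos_lt a a'])
          (apos_lt (apair a b) (apair a' b')) (AMul (abounded a z z') (abounded a' w w')))
      (AMul (afamily (abracket_lits a b z z' @ abracket_lits a b' w w' @ [apos_lt b b'])
          (apos_lt (apair a b) (apair a b')) (AMul (abounded a z z') (abounded a w w')))
      (AMul (afamily (abracket_lits a b z z' @ abracket_lits a' b' w w' @ [apos_lt a' a])
          (aneg_lt (apair a b) (apair a' b')) (AMul (abounded a z z') (abounded a' w w')))
      (AMul (afamily (abracket_lits a b z z' @ abracket_lits a b' w w' @ [apos_lt b' b])
          (aneg_lt (apair a b) (apair a b')) (AMul (abounded a z z') (abounded a w w')))
      (afamily (abracket_lits a b z z') (aneg_lt (apair a b) (apair a b)) (abounded a z z')))))))"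

definition abracket_matrix :: aexp where
  "abracket_matrix = abracket_op (aparam 0) (aparam 1) (aparam 2) (aparam 3)
     (aparam 4) (aparam 5) (aparam 6) (aparam 7)"

lemma aclosed_abracket_matrix: "aclosed 2 abracket_matrix"
  by (simp add: abracket_matrix_def abracket_op_def afamily_def abracket_lits_def abounded_def)

lemma abracket_matrix_zero_if_bracket_op:
  assumes "(\<alpha>, \<phi>) \<in> bracket_op"
  shows "\<exists>a b z z' a' b' w w' r.
    aval abracket_matrix [tuple_code [a, b, z, z', a', b', w, w'] r, op_code (\<alpha>, \<phi>)] = 0"
    (is "\<exists>a b z z' a' b' w w' r. ?zero a b z z' a' b' w w' r")
proof -
  note [simp] = abracket_matrix_def abracket_op_def aval_afamily_eq_0 op_code_def abracket_lits_def
    bracket_lits_def abounded_def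
  note [simp del] = lit_code.simps atom_code.simps
  from assms show ?thesis
  proof cases
    case (eq z a z' b)
    then have "?zero a b z z' 0 0 0 0 0" by auto
    then show ?thesis by blast
  next
    case (neq z a z' w a' w' b b')
    then have "?zero a b z z' a' b' w w' 0" by auto
    then show ?thesis by blast
  next
    case (lt_fst z a z' w a' w' b b')
    then have "?zero a b z z' a' b' w w' 0" by auto
    then show ?thesis by blast
  next
    case (lt_snd z a z' w w' b b')
    then have "?zero a b z z' a b' w w' 0" by auto
    then show ?thesis by blast
  next
    case (nlt_fst z a z' w a' w' b b')
    then have "?zero a b z z' a' b' w w' 0" by auto
    then show ?thesis by blast
  next
    case (nlt_snd z a z' w w' b b')
    then have "?zero a b z z' a b' w w' 0" by auto
    then show ?thesis by blast
  next
    case (nlt_refl z a z' b)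
    then have "?zero a b z z' 0 0 0 0 0" by auto
    then show ?thesis by blast
  qed
qed

lemma bracket_op_if_abracket_matrix_zero:
  assumes "aval abracket_matrix [tuple_code [a, b, z, z', a', b', w, w'] r, x] = 0"
  shows "x \<in> op_code ` bracket_op"
proof -
  note codes = bracket_op.intros[THEN imageI[where f = op_code], unfolded op_code_set,
      unfolded bracket_lits_def append.simps list.set image_insert image_empty]
  show ?thesis
    using assms
    by (auto simp: abracket_matrix_def abracket_op_def aval_afamily_eq_0 abracket_lits_def
        abounded_def simp del: lit_code.simps atom_code.simps split: if_split_asm intro: codes)
qed

lemma op_code_bracket_op_iff: "x \<in> op_code ` bracket_op \<longleftrightarrow> (\<exists>y. aval abracket_matrix [y, x] = 0)"
proof
  assume "x \<in> op_code ` bracket_op"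
  then obtain \<alpha> \<phi> where "(\<alpha>, \<phi>) \<in> bracket_op" "x = op_code (\<alpha>, \<phi>)"
    by auto
  then show "\<exists>y. aval abracket_matrix [y, x] = 0"
    using abracket_matrix_zero_if_bracket_op by blast
next
  assume "\<exists>y. aval abracket_matrix [y, x] = 0"
  then show "x \<in> op_code ` bracket_op"
    unfolding ex_tuple_code8[of "\<lambda>y. aval abracket_matrix [y, x] = 0"]
    using bracket_op_if_abracket_matrix_zero by blast
qed

lemma enum_op_bracket_op: "enum_op bracket_op"
  unfolding enum_op_def op_code_def[symmetric]
proof
  show "\<forall>(\<alpha>, \<phi>)\<in>bracket_op. finite \<alpha>"
    by (auto elim: bracket_op.cases)
  show "ce (op_code ` bracket_op)"
    by (rule ce_if_aexp_zero_projection[OF aclosed_abracket_matrix op_code_bracket_op_iff])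
qed

section \<open>Isomorphism and well orders\<close>

lemma iso_sym:
  assumes "iso S T"
  shows "iso T S"
proof -
  obtain f where f: "bij_betw f (fst S) (fst T)"
    and rel: "\<forall>a\<in>fst S. \<forall>b\<in>fst S. (a, b) \<in> snd S \<longleftrightarrow> (f a, f b) \<in> snd T"
    using assms unfolding iso_def by blast
  let ?g = "inv_into (fst S) f"
  have "bij_betw ?g (fst T) (fst S)"
    using f by (rule bij_betw_inv_into)
  moreover have "\<forall>a\<in>fst T. \<forall>b\<in>fst T. (a, b) \<in> snd T \<longleftrightarrow> (?g a, ?g b) \<in> snd S"
    using rel f by (auto simp: bij_betw_def f_inv_into_f inv_into_into)
  ultimately show ?thesis
    unfolding iso_def by blast
qed

lemma iso_trans:
  assumes "iso S T" "iso T U"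
  shows "iso S U"
proof -
  obtain f g where f: "bij_betw f (fst S) (fst T)" and g: "bij_betw g (fst T) (fst U)"
    and "\<forall>a\<in>fst S. \<forall>b\<in>fst S. (a, b) \<in> snd S \<longleftrightarrow> (f a, f b) \<in> snd T"
    and "\<forall>a\<in>fst T. \<forall>b\<in>fst T. (a, b) \<in> snd T \<longleftrightarrow> (g a, g b) \<in> snd U"
    using assms unfolding iso_def by blast
  moreover from f g have "bij_betw (g \<circ> f) (fst S) (fst U)"
    by (rule bij_betw_trans)
  ultimately show ?thesis
    unfolding iso_def using bij_betwE[OF f] by (intro exI[of _ "g \<circ> f"]) auto
qed

lemma iso_rev_order: "iso S T \<Longrightarrow> iso (rev_order S) (rev_order T)"
  unfolding iso_def rev_order_def by auto

lemma rev_order_rev_order [simp]: "rev_order (rev_order S) = S"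
  unfolding rev_order_def by simp

lemma rev_order_simps [simp]: "fst (rev_order S) = fst S" "snd (rev_order S) = (snd S)\<inverse>"
  unfolding rev_order_def by simp_all

lemma wf_struc_rev_order: "wf_struc S \<Longrightarrow> wf_struc (rev_order S)"
  unfolding wf_struc_def by auto

lemma strict_linear_order_on_converse:
  "strict_linear_order_on A r \<Longrightarrow> strict_linear_order_on A (r\<inverse>)"
  unfolding strict_linear_order_on_def irrefl_def total_on_def trans_def by blast

lemma strict_linear_order_on_iso:
  assumes "iso S T" "wf_struc S" "strict_linear_order_on (fst T) (snd T)"
  shows "strict_linear_order_on (fst S) (snd S)"
proof -
  obtain f where f: "bij_betw f (fst S) (fst T)"
    and rel: "\<And>a b. a \<in> fst S \<Longrightarrow> b \<in> fst S \<Longrightarrow> (a, b) \<in> snd S \<longleftrightarrow> (f a, f b) \<in> snd T"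
    using assms(1) unfolding iso_def by blast
  have dom: "(a, b) \<in> snd S \<Longrightarrow> a \<in> fst S \<and> b \<in> fst S" for a b
    using assms(2) unfolding wf_struc_def by auto
  have inj: "a \<in> fst S \<Longrightarrow> b \<in> fst S \<Longrightarrow> f a = f b \<Longrightarrow> a = b"
    and into: "a \<in> fst S \<Longrightarrow> f a \<in> fst T" for a b
    using f by (auto simp: bij_betw_def inj_on_def)
  from assms(3) have T: "trans (snd T)" "irrefl (snd T)" "total_on (fst T) (snd T)"
    unfolding strict_linear_order_on_def by auto
  show ?thesis
    unfolding strict_linear_order_on_def
  proof (intro conjI)
    show "trans (snd S)"
      using T(1) rel dom by (unfold trans_def) metis
    show "irrefl (snd S)"
      using T(2) rel dom by (unfold irrefl_def) metis
    show "total_on (fst S) (snd S)"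
      using T(3) rel inj into by (unfold total_on_def) metis
  qed
qed

definition strict_well_order :: "'a struc \<Rightarrow> bool" where
  "strict_well_order S \<longleftrightarrow>
     wf_struc S \<and> strict_linear_order_on (fst S) (snd S) \<and> wf (snd S)"

lemma Well_order_refl_closure:
  assumes "strict_well_order S"
  shows "Well_order (snd S \<union> Id_on (fst S))" "Field (snd S \<union> Id_on (fst S)) = fst S"
    "snd S \<union> Id_on (fst S) - Id = snd S"
proof -
  from assms have sub: "snd S \<subseteq> fst S \<times> fst S" and irr: "irrefl (snd S)"
    and lin: "strict_linear_order_on (fst S) (snd S)" and wf: "wf (snd S)"
    unfolding strict_well_order_def wf_struc_def strict_linear_order_on_def by auto
  show field: "Field (snd S \<union> Id_on (fst S)) = fst S"
    using sub unfolding Field_def by auto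
  show diff: "snd S \<union> Id_on (fst S) - Id = snd S"
    using irr by (auto simp: irrefl_def)
  from lin have trans: "trans (snd S)" and total: "total_on (fst S) (snd S)"
    unfolding strict_linear_order_on_def by auto
  show "Well_order (snd S \<union> Id_on (fst S))"
    unfolding well_order_on_def linear_order_on_def partial_order_on_def preorder_on_def field diff
  proof (intro conjI)
    show "snd S \<union> Id_on (fst S) \<subseteq> fst S \<times> fst S" "refl_on (fst S) (snd S \<union> Id_on (fst S))"
      using sub by (auto simp: refl_on_def)
    show "trans (snd S \<union> Id_on (fst S))"
      using trans unfolding trans_def by blast
    show "antisym (snd S \<union> Id_on (fst S))"
      using trans irr unfolding trans_def irrefl_def antisym_def by blast
    show "total_on (fst S) (snd S \<union> Id_on (fst S))"
      using total unfolding total_on_def by blast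
  qed (rule wf)
qed

lemma wf_not_mono_decreasing:
  assumes "wf R" and mono: "\<And>x y. (x, y) \<in> R \<Longrightarrow> (h x, h y) \<in> R"
  shows "(h x, x) \<notin> R"
proof
  assume "(h x, x) \<in> R"
  then obtain m where m: "(h m, m) \<in> R" and min: "\<And>y. (y, m) \<in> R \<Longrightarrow> (h y, y) \<notin> R"
    using wf_eq_minimal[THEN iffD1, OF assms(1), rule_format, of x "{x. (h x, x) \<in> R}"] by blast
  from mono[OF m] min[OF m] show False
    by blast
qed

lemma ordLess_bound:
  assumes W: "Well_order r" and W': "Well_order r'" and "(r', r) \<in> ordLess"
  obtains g a where "embed r' r g" "a \<in> Field r" "\<And>b. b \<in> Field r' \<Longrightarrow> (g b, a) \<in> r - Id"
proof -
  obtain g where emb: "embed r' r g" and "\<not> bij_betw g (Field r') (Field r)"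
    using assms(3) unfolding ordLess_def embedS_def by auto
  moreover have "inj_on g (Field r')" and into: "g ` Field r' \<subseteq> Field r"
    using embed_inj_on[OF W' emb] embed_Field[OF emb] .
  ultimately obtain a where a: "a \<in> Field r" "a \<notin> g ` Field r'"
    unfolding bij_betw_def by blast
  have "(g b, a) \<in> r - Id" if "b \<in> Field r'" for b
  proof -
    have "under r (g b) \<subseteq> g ` Field r'"
      using embed_Field_ofilter[OF W' W emb] that W
      unfolding wo_rel.ofilter_def[unfolded wo_rel_def, OF W] by blast
    then have "(a, g b) \<notin> r"
      using a(2) unfolding under_def by blast
    moreover have "a \<noteq> g b" "g b \<in> Field r"
      using a(2) that into by blast+
    ultimately show ?thesis
      using W a(1) unfolding well_order_on_def linear_order_on_def total_on_def by blast
  qed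
  with emb a(1) show ?thesis
    using that by blast
qed

text \<open>Otherwise \<open>r'\<close> embeds into \<open>r\<close> below some \<open>a\<close>, and the strictly increasing self-map
  \<open>g \<circ> f\<close> of \<open>r\<close> would send \<open>a\<close> below itself.\<close>

lemma ordLeq_if_strict_mono:
  assumes W: "Well_order r" and W': "Well_order r'"
    and into: "\<And>a. a \<in> Field r \<Longrightarrow> f a \<in> Field r'"
    and mono: "\<And>a b. (a, b) \<in> r - Id \<Longrightarrow> (f a, f b) \<in> r' - Id"
  shows "(r, r') \<in> ordLeq"
proof (rule ccontr)
  assume "(r, r') \<notin> ordLeq"
  then have "(r', r) \<in> ordLess"
    using not_ordLeq_iff_ordLess W W' by blast
  then obtain g a where emb: "embed r' r g" and a: "a \<in> Field r"
    and below: "\<And>b. b \<in> Field r' \<Longrightarrow> (g b, a) \<in> r - Id"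
    using ordLess_bound[OF W W'] by blast
  have "(g (f x), g (f y)) \<in> r - Id" if "(x, y) \<in> r - Id" for x y
  proof -
    have "(f x, f y) \<in> r' - Id"
      using mono[OF that] .
    moreover from this have "f x \<in> Field r'" "f y \<in> Field r'"
      by (auto simp: Field_def)
    ultimately show ?thesis
      using embed_compat[OF emb] embed_inj_on[OF W' emb] unfolding compat_def inj_on_def by auto
  qed
  moreover have "wf (r - Id)"
    using W unfolding well_order_on_def by blast
  ultimately have "(g (f a), a) \<notin> r - Id"
    using wf_not_mono_decreasing[of "r - Id" "g \<circ> f"] by auto
  with below into a show False
    by blast
qed

lemma iso_if_strict_mono_both_ways:
  assumes S: "strict_well_order S" and T: "strict_well_order T"
    and f: "\<And>a. a \<in> fst S \<Longrightarrow> f a \<in> fst T" "\<And>a b. (a, b) \<in> snd S \<Longrightarrow> (f a, f b) \<in> snd T"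
    and g: "\<And>a. a \<in> fst T \<Longrightarrow> g a \<in> fst S" "\<And>a b. (a, b) \<in> snd T \<Longrightarrow> (g a, g b) \<in> snd S"
  shows "iso S T"
proof -
  let ?rS = "snd S \<union> Id_on (fst S)" and ?rT = "snd T \<union> Id_on (fst T)"
  note rS = Well_order_refl_closure[OF S] and rT = Well_order_refl_closure[OF T]
  have "(?rS, ?rT) \<in> ordLeq"
    using ordLeq_if_strict_mono[OF rS(1) rT(1), of f, unfolded rS(2,3) rT(2,3)] f by blast
  moreover have "(?rT, ?rS) \<in> ordLeq"
    using ordLeq_if_strict_mono[OF rT(1) rS(1), of g, unfolded rS(2,3) rT(2,3)] g by blast
  ultimately have "(?rS, ?rT) \<in> ordIso"
    using ordIso_iff_ordLeq by blast
  then obtain h where "BNF_Wellorder_Embedding.iso ?rS ?rT h"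
    unfolding ordIso_def by blast
  then have h: "bij_betw h (fst S) (fst T)"
    and rel: "\<And>a b. a \<in> fst S \<Longrightarrow> b \<in> fst S \<Longrightarrow> (a, b) \<in> ?rS \<longleftrightarrow> (h a, h b) \<in> ?rT"
    unfolding BNF_Wellorder_Embedding.iso_iff2 rS(2) rT(2) by auto
  have "(a, b) \<in> snd S \<longleftrightarrow> (h a, h b) \<in> snd T" if "a \<in> fst S" "b \<in> fst S" for a b
    using rel[OF that] rS(3) rT(3) h that by (auto simp: bij_betw_def inj_on_def)
  with h show ?thesis
    unfolding Defs.iso_def by blast
qed

lemma omega_pow_simps:
  "fst (omega_pow m) = {xs. length xs = m}"
  "(xs, ys) \<in> snd (omega_pow m) \<longleftrightarrow> length xs = m \<and> length ys = m \<and> (xs, ys) \<in> lex less_than"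
  unfolding omega_pow_def by auto

lemma lex_less_than_trans:
  "(xs, ys) \<in> lex less_than \<Longrightarrow> (ys, zs) \<in> lex less_than \<Longrightarrow> (xs, zs) \<in> lex less_than"
  using lexord_trans[of xs ys less_than zs] trans_less_than by (auto simp: lexord_lex)

lemma lex_less_than_total:
  "length xs = length ys \<Longrightarrow> xs \<noteq> ys \<Longrightarrow> (xs, ys) \<in> lex less_than \<or> (ys, xs) \<in> lex less_than"
proof -
  have "total (lexord less_than)"
    by (rule total_lexord) (auto simp: total_on_def)
  moreover assume "length xs = length ys" "xs \<noteq> ys"
  ultimately show ?thesis
    by (auto simp: lexord_lex total_on_def)
qed

lemma lex_append_iff:
  assumes "length us = length us'"
  shows "(us @ vs, us' @ vs') \<in> lex r \<longleftrightarrow>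
    (us, us') \<in> lex r \<and> length vs = length vs' \<or> us = us' \<and> (vs, vs') \<in> lex r"
  using assms
proof (induction us arbitrary: us')
  case (Cons u us)
  then show ?case by (cases us') auto
qed simp

lemma strict_well_order_omega_pow: "strict_well_order (omega_pow m)"
  unfolding strict_well_order_def wf_struc_def strict_linear_order_on_def
proof (intro conjI)
  show "snd (omega_pow m) \<subseteq> fst (omega_pow m) \<times> fst (omega_pow m)"
    "irrefl (snd (omega_pow m))"
    by (auto simp: omega_pow_simps irrefl_def)
  show "trans (snd (omega_pow m))"
    unfolding trans_def by (auto simp: omega_pow_simps intro: lex_less_than_trans)
  show "total_on (fst (omega_pow m)) (snd (omega_pow m))"
    unfolding total_on_def by (auto simp: omega_pow_simps dest: lex_less_than_total)
  show "wf (snd (omega_pow m))"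
    by (rule wf_subset[OF wf_lex[OF wf_less_than]]) (auto simp: omega_pow_simps)
qed

lemma not_iso_rev_order_if_least_unbounded:
  assumes least: "z \<in> fst S" "\<And>x. x \<in> fst S \<Longrightarrow> x \<noteq> z \<Longrightarrow> (z, x) \<in> snd S"
    and unbounded: "\<And>w. w \<in> fst S \<Longrightarrow> \<exists>u\<in>fst S. (w, u) \<in> snd S"
    and asym: "\<And>x y. (x, y) \<in> snd S \<Longrightarrow> (y, x) \<notin> snd S"
  shows "\<not> iso S (rev_order S)"
proof
  assume "iso S (rev_order S)"
  then obtain h where h: "bij_betw h (fst S) (fst S)"
    and rel: "\<And>a b. a \<in> fst S \<Longrightarrow> b \<in> fst S \<Longrightarrow> (a, b) \<in> snd S \<longleftrightarrow> (h b, h a) \<in> snd S"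
    unfolding iso_def by auto
  obtain u where u: "u \<in> fst S" "(h z, u) \<in> snd S"
    using unbounded bij_betwE[OF h] least(1) by blast
  then obtain v where v: "v \<in> fst S" "u = h v"
    using h unfolding bij_betw_def by blast
  with u asym have "v \<noteq> z"
    by blast
  with least v have "(h v, h z) \<in> snd S"
    using rel by blast
  with u v asym show False
    by blast
qed

lemma lex_replicate_0: "length v = k \<Longrightarrow> v \<noteq> replicate k 0 \<Longrightarrow> (replicate k 0, v) \<in> lex less_than"
proof (induction k arbitrary: v)
  case (Suc k)
  then obtain d ds where "v = d # ds" "length ds = k"
    by (cases v) auto
  with Suc show ?case
    by (cases "d = 0") auto
qed simp

lemma not_iso_omega_pow_rev_order:
  assumes "1 \<le> m"
  shows "\<not> iso (omega_pow m) (rev_order (omega_pow m))"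
proof (rule not_iso_rev_order_if_least_unbounded)
  show "replicate m 0 \<in> fst (omega_pow m)"
    by (simp add: omega_pow_simps)
  show "(replicate m 0, v) \<in> snd (omega_pow m)"
    if "v \<in> fst (omega_pow m)" "v \<noteq> replicate m 0" for v
    using that lex_replicate_0 by (auto simp: omega_pow_simps)
  show "\<exists>u\<in>fst (omega_pow m). (w, u) \<in> snd (omega_pow m)" if "w \<in> fst (omega_pow m)" for w
  proof (cases w)
    case (Cons c cs)
    with that show ?thesis
      by (intro bexI[of _ "Suc c # cs"]) (auto simp: omega_pow_simps)
  qed (use that assms in \<open>auto simp: omega_pow_simps\<close>)
  show "(y, x) \<notin> snd (omega_pow m)" if "(x, y) \<in> snd (omega_pow m)" for x y
    using that lex_less_than_trans[of x y x] by (auto simp: omega_pow_simps irrefl_def)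
qed

section \<open>The bracket construction applied to a copy of \<omega>^n\<close>

lemma strict_linear_order_on_bracket_struc:
  assumes wf: "wf_struc A" and lin: "strict_linear_order_on (fst A) (snd A)"
  shows "strict_linear_order_on (fst (bracket_struc A)) (snd (bracket_struc A))"
  unfolding strict_linear_order_on_def
proof (intro conjI)
  from lin have irr: "(x, x) \<notin> snd A" and tr: "trans (snd A)"
    and tot: "total_on (fst A) (snd A)" for x
    unfolding strict_linear_order_on_def irrefl_def by auto
  show "irrefl (snd (bracket_struc A))"
  proof
    fix e
    show "(e, e) \<notin> snd (bracket_struc A)"
      using irr by (auto elim!: bracket_struc_sndE)
  qed
  show "trans (snd (bracket_struc A))"
  proof
    fix x y z
    assume "(x, y) \<in> snd (bracket_struc A)" "(y, z) \<in> snd (bracket_struc A)"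
    then obtain a b a' b' a'' b'' where "x = pcode a b" "y = pcode a' b'" "z = pcode a'' b''"
      "bracketed A a b" "bracketed A a'' b''"
      "(a, a') \<in> snd A \<or> a = a' \<and> (b, b') \<in> snd A"
      "(a', a'') \<in> snd A \<or> a' = a'' \<and> (b', b'') \<in> snd A"
      by (elim bracket_struc_sndE) auto
    then show "(x, z) \<in> snd (bracket_struc A)"
      using tr by (auto simp: bracket_struc_snd dest: transD)
  qed
  show "total_on (fst (bracket_struc A)) (snd (bracket_struc A))"
  proof
    fix x y
    assume "x \<in> fst (bracket_struc A)" "y \<in> fst (bracket_struc A)" "x \<noteq> y"
    then obtain a b a' b' where "x = pcode a b" "y = pcode a' b'"
      "bracketed A a b" "bracketed A a' b'" "(a, b) \<noteq> (a', b')"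
      by (auto simp: bracket_struc_fst)
    with tot bracketed_in_fst[OF wf]
    show "(x, y) \<in> snd (bracket_struc A) \<or> (y, x) \<in> snd (bracket_struc A)"
      unfolding total_on_def by (cases "a = a'") (auto simp: bracket_struc_snd)
  qed
qed

locale omega_pow_copy =
  fixes A :: "nat struc" and n :: nat and f :: "nat \<Rightarrow> nat list"
  assumes wf: "wf_struc A" and n_pos: "1 \<le> n"
    and f_bij: "bij_betw f (fst A) {xs. length xs = n}"
    and f_rel: "\<And>a b. a \<in> fst A \<Longrightarrow> b \<in> fst A \<Longrightarrow> (a, b) \<in> snd A \<longleftrightarrow> (f a, f b) \<in> lex less_than"
begin

definition g :: "nat list \<Rightarrow> nat" where
  "g = inv_into (fst A) f"

lemma length_f: "a \<in> fst A \<Longrightarrow> length (f a) = n"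
  using f_bij bij_betwE by fastforce

lemma g_in: "length v = n \<Longrightarrow> g v \<in> fst A"
  unfolding g_def using f_bij by (auto simp: bij_betw_def intro: inv_into_into)

lemma f_g: "length v = n \<Longrightarrow> f (g v) = v"
  unfolding g_def using f_bij by (simp add: bij_betw_def f_inv_into_f)

lemma g_f: "a \<in> fst A \<Longrightarrow> g (f a) = a"
  unfolding g_def using f_bij by (simp add: bij_betw_def inv_into_f_f)

lemma g_rel: "length v = n \<Longrightarrow> length w = n \<Longrightarrow> (g v, g w) \<in> snd A \<longleftrightarrow> (v, w) \<in> lex less_than"
  using f_rel[OF g_in g_in] f_g by simp

lemma rel_in: "(a, b) \<in> snd A \<Longrightarrow> a \<in> fst A \<and> b \<in> fst A"
  using wf unfolding wf_struc_def by auto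

lemma f_Cons: "a \<in> fst A \<Longrightarrow> f a = hd (f a) # tl (f a)"
  using length_f[of a] n_pos by (cases "f a") auto

lemma iso_omega_pow: "iso A (omega_pow n)"
  unfolding iso_def by (rule exI[of _ f]) (use f_bij f_rel length_f in \<open>auto simp: omega_pow_simps\<close>)

lemma strict_linear: "strict_linear_order_on (fst A) (snd A)"
  using strict_linear_order_on_iso[OF iso_omega_pow wf] strict_well_order_omega_pow
  unfolding strict_well_order_def by blast

definition head_bound :: "nat \<Rightarrow> nat" where
  "head_bound a = Max (insert 0 ((\<lambda>z. hd (f z)) ` {z \<in> fst A. z \<le> a}))"

lemma hd_le_head_bound:
  assumes "bracketed A a b"
  shows "hd (f b) \<le> head_bound a"
proof -
  obtain z' where z': "z' \<le> a" "(b, z') \<in> snd A"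
    using assms unfolding bracketed_def by blast
  then have "z' \<in> fst A" "(f b, f z') \<in> lex less_than"
    using rel_in f_rel by blast+
  then have "hd (f b) \<le> hd (f z')"
    using f_Cons rel_in[OF z'(2)] by (metis Cons_in_lex less_than_iff order.order_iff_strict)
  also have "\<dots> \<le> head_bound a"
    unfolding head_bound_def using \<open>z' \<in> fst A\<close> z'(1) by (intro Max_ge) auto
  finally show ?thesis .
qed

text \<open>The last coordinate \<open>c\<close> of \<open>f a = p @ [c]\<close> is stretched to \<open>offset p c\<close>, leaving a gap
  of \<open>head_bound a + 1\<close> for the leading coordinate of \<open>f b\<close>.\<close>

definition offset :: "nat list \<Rightarrow> nat \<Rightarrow> nat" where
  "offset p c = (\<Sum>k<c. head_bound (g (p @ [k])) + 1)"

lemma offset_gap: "c < c' \<Longrightarrow> offset p c + head_bound (g (p @ [c])) < offset p c'"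
proof -
  assume "c < c'"
  then have "offset p (Suc c) \<le> offset p c'"
    unfolding offset_def by (intro sum_mono2) auto
  then show ?thesis
    unfolding offset_def by simp
qed

definition pair_to_omega :: "nat \<Rightarrow> nat \<Rightarrow> nat list" where
  "pair_to_omega a b = butlast (f a) @ [offset (butlast (f a)) (last (f a)) + hd (f b)] @ tl (f b)"

lemma length_pair_to_omega:
  "a \<in> fst A \<Longrightarrow> b \<in> fst A \<Longrightarrow> length (pair_to_omega a b) = 2 * n - 1"
  unfolding pair_to_omega_def using length_f n_pos by auto

lemma pair_to_omega_mono_snd:
  assumes "(b, b') \<in> snd A"
  shows "(pair_to_omega a b, pair_to_omega a b') \<in> lex less_than"
proof -
  have "(hd (f b) # tl (f b), hd (f b') # tl (f b')) \<in> lex less_than"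
    using assms f_rel rel_in f_Cons by metis
  then have "((offset (butlast (f a)) (last (f a)) + hd (f b)) # tl (f b),
      (offset (butlast (f a)) (last (f a)) + hd (f b')) # tl (f b')) \<in> lex less_than"
    by auto
  then show ?thesis
    unfolding pair_to_omega_def by (simp add: lex_append_leftI)
qed

lemma pair_to_omega_mono_fst:
  assumes "(a, a') \<in> snd A" and "bracketed A a b" and "b' \<in> fst A"
  shows "(pair_to_omega a b, pair_to_omega a' b') \<in> lex less_than"
proof -
  define p c p' c'
    where "p = butlast (f a)" "c = last (f a)" "p' = butlast (f a')" "c' = last (f a')"
  have fa: "f a = p @ [c]" "f a' = p' @ [c']"
    unfolding p_c_p'_c'_def using rel_in[OF assms(1)] length_f n_pos
    by (metis append_butlast_last_id list.size(3) not_one_le_zero)+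
  moreover have "length p = length p'"
    using fa rel_in[OF assms(1)] length_f by (metis length_append_singleton nat.inject)
  moreover have "(f a, f a') \<in> lex less_than"
    using assms(1) f_rel rel_in by blast
  ultimately have "(p, p') \<in> lex less_than \<or> p = p' \<and> c < c'"
    using lex_append_iff by fastforce
  moreover have "length (tl (f b)) = length (tl (f b'))"
    using assms(3) bracketed_in_fst[OF wf assms(2)] length_f by simp
  moreover have "offset p c + hd (f b) < offset p c' + hd (f b')" if "c < c'"
    using offset_gap[OF that, of p] hd_le_head_bound[OF assms(2)] g_f rel_in[OF assms(1)] fa(1)
    by fastforce
  moreover have "pair_to_omega a b = p @ (offset p c + hd (f b)) # tl (f b)"
    "pair_to_omega a' b' = p' @ (offset p' c' + hd (f b')) # tl (f b')"
    unfolding pair_to_omega_def p_c_p'_c'_def by simp_all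
  ultimately show ?thesis
    by (auto intro: lex_append_rightI lex_append_leftI)
qed

lemma pair_to_omega_mono:
  assumes "(pcode a b, pcode a' b') \<in> snd (bracket_struc A)"
  shows "(pair_to_omega a b, pair_to_omega a' b') \<in> lex less_than"
  using assms bracketed_in_fst[OF wf]
  by (auto simp: bracket_struc_snd intro: pair_to_omega_mono_fst pair_to_omega_mono_snd)

lemma strict_well_order_bracket_struc: "strict_well_order (bracket_struc A)"
  unfolding strict_well_order_def
proof (intro conjI)
  show "wf_struc (bracket_struc A)"
    by (rule wf_struc_bracket_struc)
  show "strict_linear_order_on (fst (bracket_struc A)) (snd (bracket_struc A))"
    by (rule strict_linear_order_on_bracket_struc[OF wf strict_linear])
  have "snd (bracket_struc A) \<subseteq>
      inv_image (lex less_than) (\<lambda>e. case prod_decode e of (a, b) \<Rightarrow> pair_to_omega a b)"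
    by (auto elim!: bracket_struc_sndE intro: pair_to_omega_mono[OF bracket_struc_snd[THEN iffD2]])
  then show "wf (snd (bracket_struc A))"
    by (rule wf_subset[OF wf_inv_image[OF wf_lex[OF wf_less_than]]])
qed

definition least :: nat where
  "least = g (replicate n 0)"

definition lead_bound :: nat where
  "lead_bound = Max (insert 0 ((\<lambda>w. hd (f w)) ` {w \<in> fst A. w \<le> least})) + 2"

lemma hd_less_lead_bound:
  assumes "w \<in> fst A" "w \<le> least"
  shows "hd (f w) < lead_bound"
proof -
  have "hd (f w) \<le> Max (insert 0 ((\<lambda>w. hd (f w)) ` {w \<in> fst A. w \<le> least}))"
    using assms by (intro Max_ge) auto
  then show ?thesis
    unfolding lead_bound_def by simp
qed

text \<open>The first half of \<open>v\<close>, with its leading coordinate raised above those of all elements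
  numerically at most \<open>least\<close>, gives an \<open>a\<close> numerically above \<open>least\<close>; the second half,
  prefixed by \<open>1\<close>, gives a \<open>b\<close> strictly between \<open>least\<close> and \<open>a\<close> in \<open>A\<close>, hence bracketed by \<open>a\<close>.\<close>

definition upper_half :: "nat list \<Rightarrow> nat list" where
  "upper_half v = (lead_bound + hd (take n v)) # tl (take n v)"

definition lower_half :: "nat list \<Rightarrow> nat list" where
  "lower_half v = 1 # drop n v"

definition omega_to_pair :: "nat list \<Rightarrow> nat" where
  "omega_to_pair v = pcode (g (upper_half v)) (g (lower_half v))"

lemma length_halves:
  assumes "length v = 2 * n - 1"
  shows "length (upper_half v) = n" "length (lower_half v) = n"
proof -
  have "length (take n v) = n"
    using assms n_pos by simp
  then show "length (upper_half v) = n"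
    unfolding upper_half_def using n_pos by (cases "take n v") auto
  show "length (lower_half v) = n"
    using assms n_pos unfolding lower_half_def by simp
qed

lemma bracketed_halves:
  assumes "length v = 2 * n - 1"
  shows "bracketed A (g (upper_half v)) (g (lower_half v))"
proof -
  note len = length_halves[OF assms]
  have "least \<le> g (upper_half v)"
  proof (rule ccontr)
    assume "\<not> least \<le> g (upper_half v)"
    then have "hd (f (g (upper_half v))) < lead_bound"
      using hd_less_lead_bound g_in[OF len(1)] by simp
    then show False
      using f_g[OF len(1)] unfolding upper_half_def by simp
  qed
  moreover have "(replicate n 0, lower_half v) \<in> lex less_than"
    using len(2) n_pos unfolding lower_half_def by (cases n) auto
  then have "(least, g (lower_half v)) \<in> snd A"
    unfolding least_def using g_rel len(2) by simp
  moreover have "(lower_half v, upper_half v) \<in> lex less_than"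
    using len unfolding upper_half_def lower_half_def lead_bound_def by auto
  then have "(g (lower_half v), g (upper_half v)) \<in> snd A"
    using g_rel len by simp
  ultimately show ?thesis
    unfolding bracketed_def using g_in[OF len(1)] by blast
qed

lemma omega_to_pair_mono:
  assumes "length v = 2 * n - 1" "length v' = 2 * n - 1" "(v, v') \<in> lex less_than"
  shows "(omega_to_pair v, omega_to_pair v') \<in> snd (bracket_struc A)"
proof -
  note len = length_halves[OF assms(1)] length_halves[OF assms(2)]
  have "(take n v, take n v') \<in> lex less_than \<or>
      take n v = take n v' \<and> (drop n v, drop n v') \<in> lex less_than"
    using lex_append_iff[of "take n v" "take n v'" "drop n v" "drop n v'" less_than] assms by auto
  then have "(upper_half v, upper_half v') \<in> lex less_than \<or>
      upper_half v = upper_half v' \<and> (lower_half v, lower_half v') \<in> lex less_than"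
    using assms(1,2) n_pos unfolding upper_half_def lower_half_def
    by (cases "take n v"; cases "take n v'") auto
  then have "(g (upper_half v), g (upper_half v')) \<in> snd A \<or>
      g (upper_half v) = g (upper_half v') \<and> (g (lower_half v), g (lower_half v')) \<in> snd A"
    using g_rel len by auto
  then show ?thesis
    unfolding omega_to_pair_def using bracketed_halves assms(1,2) by (simp add: bracket_struc_snd)
qed

theorem iso_bracket_struc: "iso (bracket_struc A) (omega_pow (2 * n - 1))"
proof (rule iso_if_strict_mono_both_ways[OF
      strict_well_order_bracket_struc strict_well_order_omega_pow])
  let ?F = "\<lambda>e. case prod_decode e of (a, b) \<Rightarrow> pair_to_omega a b"
  show "?F e \<in> fst (omega_pow (2 * n - 1))" if "e \<in> fst (bracket_struc A)" for e
    using that bracketed_in_fst[OF wf] length_pair_to_omega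
    by (auto simp: bracket_struc_fst omega_pow_simps)
  show "(?F e, ?F e') \<in> snd (omega_pow (2 * n - 1))" if "(e, e') \<in> snd (bracket_struc A)" for e e'
    using that bracketed_in_fst[OF wf] length_pair_to_omega pair_to_omega_mono
    by (auto simp: omega_pow_simps bracket_struc_snd elim!: bracket_struc_sndE)
  show "omega_to_pair v \<in> fst (bracket_struc A)" if "v \<in> fst (omega_pow (2 * n - 1))" for v
    using that bracketed_halves unfolding omega_to_pair_def
    by (auto simp: bracket_struc_fst omega_pow_simps)
  show "(omega_to_pair v, omega_to_pair v') \<in> snd (bracket_struc A)"
    if "(v, v') \<in> snd (omega_pow (2 * n - 1))" for v v'
    using that omega_to_pair_mono by (auto simp: omega_pow_simps)
qed

end

section \<open>Computable embedding of the two classes\<close>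

lemma iso_bracket_struc_omega_pow:
  assumes "wf_struc A" "iso A (omega_pow n)" "1 \<le> n"
  shows "iso (bracket_struc A) (omega_pow (2 * n - 1))"
proof -
  obtain f where "bij_betw f (fst A) {xs. length xs = n}"
    and "\<forall>a\<in>fst A. \<forall>b\<in>fst A. (a, b) \<in> snd A \<longleftrightarrow> (f a, f b) \<in> snd (omega_pow n)"
    using assms(2) unfolding iso_def omega_pow_simps(1) by blast
  moreover from this have "a \<in> fst A \<Longrightarrow> length (f a) = n" for a
    using bij_betwE by fastforce
  ultimately interpret omega_pow_copy A n f
    using assms(1,3) by unfold_locales (auto simp: omega_pow_simps)
  show ?thesis
    by (rule iso_bracket_struc)
qed

lemma iso_bracket_struc_rev_omega_pow:
  assumes "wf_struc A" "iso A (rev_order (omega_pow n))" "1 \<le> n"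
  shows "iso (bracket_struc A) (rev_order (omega_pow (2 * n - 1)))"
proof -
  have "iso (rev_order A) (omega_pow n)"
    using iso_rev_order[OF assms(2)] by simp
  then have "iso (bracket_struc (rev_order A)) (omega_pow (2 * n - 1))"
    using iso_bracket_struc_omega_pow wf_struc_rev_order[OF assms(1)] assms(3) by blast
  from iso_rev_order[OF this] show ?thesis
    unfolding bracket_struc_rev_order by simp
qed

lemma iso_two_class_iff:
  assumes "\<not> iso L L'" "A \<in> two_class L L'" "A' \<in> two_class L L'"
  shows "iso A A' \<longleftrightarrow> (iso A L \<longleftrightarrow> iso A' L)"
proof -
  have apart: "\<not> iso B B'" if "iso B L" "iso B' L'" for B B' :: "nat struc"
    using assms(1) iso_trans[OF iso_sym[OF that(1)] iso_trans[OF _ that(2)]] by blast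
  have excl: "\<not> iso B L'" if "iso B L" for B :: "nat struc"
    using assms(1) iso_trans[OF iso_sym[OF that]] by blast
  from assms(2,3) have "iso A L \<or> iso A L'" "iso A' L \<or> iso A' L'"
    unfolding two_class_def by auto
  then show ?thesis
  proof (elim disjE)
    assume "iso A L" "iso A' L"
    then show ?thesis
      using iso_trans[OF _ iso_sym] by blast
  next
    assume "iso A L'" "iso A' L'"
    then show ?thesis
      using iso_trans[OF _ iso_sym] apart by blast
  qed (use apart excl iso_sym in blast)+
qed

lemma struc_eq_if_diag_eq:
  assumes "wf_struc B" "wf_struc B'" "diag B = diag B'"
  shows "B = B'"
proof -
  have read_off: "fst S = {u. Pos (Eq u u) \<in> diag S}" "snd S = {(u, v). Pos (Lt u v) \<in> diag S}"
    if "wf_struc S" for S :: "nat struc"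
    using that unfolding wf_struc_def by (auto simp: diag_iff)
  have "fst B = fst B'" "snd B = snd B'"
    using read_off[OF assms(1)] read_off[OF assms(2)] assms(3) by simp_all
  then show ?thesis
    by (simp add: prod_eq_iff)
qed

lemma comp_embedsI:
  assumes "enum_op \<Gamma>"
    and "\<And>A. A \<in> K0 \<Longrightarrow> apply_op \<Gamma> (diag A) = diag (C A)"
    and "\<And>A. A \<in> K0 \<Longrightarrow> C A \<in> K1"
    and "\<And>A A'. A \<in> K0 \<Longrightarrow> A' \<in> K0 \<Longrightarrow> iso A A' \<longleftrightarrow> iso (C A) (C A')"
    and "\<And>B. B \<in> K1 \<Longrightarrow> wf_struc B"
  shows "comp_embeds K0 K1"
  unfolding comp_embeds_def
proof (intro exI conjI ballI impI)
  have "B = C A" if "A \<in> K0" "B \<in> K1" "apply_op \<Gamma> (diag A) = diag B" for A B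
    using struc_eq_if_diag_eq[of B "C A"] assms(2,3,5) that by simp
  then show "iso A A' \<longleftrightarrow> iso B B'"
    if "A \<in> K0" "A' \<in> K0" "B \<in> K1" "B' \<in> K1"
      "apply_op \<Gamma> (diag A) = diag B" "apply_op \<Gamma> (diag A') = diag B'" for A A' B B'
    using assms(4) that by metis
qed (use assms in blast)+

lemma bracket_struc_two_class:
  assumes "1 \<le> n" and A: "A \<in> two_class (omega_pow n) (rev_order (omega_pow n))"
  shows "apply_op bracket_op (diag A) = diag (bracket_struc A)"
    and "bracket_struc A \<in> two_class (omega_pow (2 * n - 1)) (rev_order (omega_pow (2 * n - 1)))"
    and "iso A (omega_pow n) \<longleftrightarrow> iso (bracket_struc A) (omega_pow (2 * n - 1))"
proof -
  have wf: "wf_struc A" and cases: "iso A (omega_pow n) \<or> iso A (rev_order (omega_pow n))"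
    using A unfolding two_class_def by auto
  have "strict_linear_order_on (fst (omega_pow n)) (snd (omega_pow n))"
    using strict_well_order_omega_pow unfolding strict_well_order_def by blast
  then have "strict_linear_order_on (fst A) (snd A)"
    using cases strict_linear_order_on_iso[OF _ wf] strict_linear_order_on_converse by fastforce
  then show "apply_op bracket_op (diag A) = diag (bracket_struc A)"
    using bracket_op_sound bracket_op_complete wf by blast
  have "iso (bracket_struc A) (omega_pow (2 * n - 1)) \<or>
      iso (bracket_struc A) (rev_order (omega_pow (2 * n - 1)))"
    using cases iso_bracket_struc_omega_pow iso_bracket_struc_rev_omega_pow wf assms(1) by blast
  then show "bracket_struc A \<in>
      two_class (omega_pow (2 * n - 1)) (rev_order (omega_pow (2 * n - 1)))"
    unfolding two_class_def using wf_struc_bracket_struc by blast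
  have "1 \<le> 2 * n - 1"
    using assms(1) by simp
  then show "iso A (omega_pow n) \<longleftrightarrow> iso (bracket_struc A) (omega_pow (2 * n - 1))"
    using cases iso_bracket_struc_rev_omega_pow[OF wf _ assms(1)]
      iso_bracket_struc_omega_pow[OF wf _ assms(1)] not_iso_omega_pow_rev_order iso_sym iso_trans
    by metis
qed

theorem corollary6p3:
  fixes n :: nat
  assumes "1 \<le> n"
  shows "comp_embeds
           (two_class (omega_pow n) (rev_order (omega_pow n)))
           (two_class (omega_pow (2 * n - 1)) (rev_order (omega_pow (2 * n - 1))))"
proof (rule comp_embedsI[OF enum_op_bracket_op])
  let ?K0 = "two_class (omega_pow n) (rev_order (omega_pow n))"
  let ?K1 = "two_class (omega_pow (2 * n - 1)) (rev_order (omega_pow (2 * n - 1)))"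
  show "apply_op bracket_op (diag A) = diag (bracket_struc A)" "bracket_struc A \<in> ?K1"
    if "A \<in> ?K0" for A
    using bracket_struc_two_class[OF assms that] by blast+
  show "iso A A' \<longleftrightarrow> iso (bracket_struc A) (bracket_struc A')" if "A \<in> ?K0" "A' \<in> ?K0" for A A'
  proof -
    have "1 \<le> 2 * n - 1"
      using assms by simp
    have "iso A A' \<longleftrightarrow> (iso A (omega_pow n) \<longleftrightarrow> iso A' (omega_pow n))"
      by (rule iso_two_class_iff[OF not_iso_omega_pow_rev_order[OF assms] that])
    also have "\<dots> \<longleftrightarrow> (iso (bracket_struc A) (omega_pow (2 * n - 1)) \<longleftrightarrow>
        iso (bracket_struc A') (omega_pow (2 * n - 1)))"
      using bracket_struc_two_class(3)[OF assms] that by simp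
    also have "\<dots> \<longleftrightarrow> iso (bracket_struc A) (bracket_struc A')"
      using iso_two_class_iff[OF not_iso_omega_pow_rev_order[OF \<open>1 \<le> 2 * n - 1\<close>]]
        bracket_struc_two_class(2)[OF assms] that by simp
    finally show ?thesis .
  qed
  show "wf_struc B" if "B \<in> ?K1" for B
    using that unfolding two_class_def by blast
qed

end
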